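(* Let $j>0$, $\rho_{\rm init}\in L^\infty([0,1],\mathbb R_+)$ with $\int_0^1\rho_{\rm init}>0$, and for each $\epsilon$ ($\epsilon^{-1}\in\mathbb N$) let $\xi=\xi^{(\epsilon)}$ be a configuration on $\{0,\dots,\epsilon^{-1}\}$ satisfying, with $\ell=\lfloor\epsilon^{-9/10}\rfloor$ and $a=1/20$, $\max_{x\in\{0,\dots,\epsilon^{-1}-\ell+1\}}|\mathcal A_\ell(x,\xi)-\mathcal A'_\ell(x,\rho_{\rm init})|\le\epsilon^a$ (and $|\epsilon R_\xi-R(\rho_{\rm init})|\le\epsilon^a$ if $\rho_{\rm init}$ has an edge). Let $T>0$ and $\gamma>0$. Then there is $\delta^*>0$ such that for every $\delta<\delta^*$ and every $\epsilon>0$ small enough the following holds: for every $\omega_0\in\mathcal G$ and every $k$ with $k\delta\le T$, $$N_{k,-}(\omega_0,|\xi|)=A^0_k(\omega_0),\qquad N_{k,+}(\omega_0,|\xi|)=B^0_k(\omega_0).$$ Finally, for every $n$ there is $c_n$ such that $P_0[\mathcal G]\ge1-c_n\epsilon^n$.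
   Context: $|\xi|=\sum_x\xi(x)$. $\mathcal A_\ell(x,\xi)=\frac1\ell\sum_{y=x}^{x+\ell-1}\xi(y)$, $\mathcal A'_\ell(x,u)=\frac1{\epsilon\ell}(\int_{\epsilon x}^1u-\int_{\epsilon(x+\ell)}^1u)$; $R_\xi$ is the rightmost occupied site, $R(u)=\inf\{r:\int_r^1u=0\}$ if $<1$. Probability space $(\Omega_0,P_0)$: $\omega_0=(\underline t_0,\underline\sigma_0)$ where $\underline t_0=(t_{1;0}<t_{2;0}<\dots)$ are the points of a Poisson process of intensity $2j\epsilon$ on $(0,\infty)$ and $\underline\sigma_0=(\sigma_{1;0},\sigma_{2;0},\dots)$ are i.i.d. with $P_0(\sigma_{h;0}=\pm1)=1/2$, independent of $\underline t_0$. Given $n_0\in\mathbb N$, define $n_t$ constant on $[t_{h;0},t_{h+1;0})$ ($t_{0;0}=0$) with $n_{t_{h+1;0}}=n_{t_{h;0}}+\sigma_{h+1;0}$ if this is $\ge0$ and $=0$ otherwise (this is the law of the total particle number of the particle system). For a fixed $\delta>0$: $N_{k,+}(\omega_0,n_0)$ and $N_{k,-}(\omega_0,n_0)$ are the numbers of upward, resp. downward, jumps of $(n_t)$ for $t\in[k\epsilon^{-2}\delta,(k+1)\epsilon^{-2}\delta]$; $B^0_k(\omega_0)=\#\{h:\sigma_{h;0}=+1,\ t_{h;0}\in[k\epsilon^{-2}\delta,(k+1)\epsilon^{-2}\delta]\}$ and $A^0_k(\omega_0)=\#\{h:\sigma_{h;0}=-1,\ t_{h;0}\in[k\epsilon^{-2}\delta,(k+1)\epsilon^{-2}\delta]\}$.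 The good set is $\mathcal G=\{\omega_0: |A^0_k(\omega_0)-\epsilon^{-1}j\delta|\le\epsilon^{-1/2-\gamma},\ |B^0_k(\omega_0)-\epsilon^{-1}j\delta|\le\epsilon^{-1/2-\gamma}\ \text{for all } k \text{ with } k\delta\le T\}$.
   Formalization: The parameter $\gamma$ is taken in the interval 0 < $\gamma$ < 1/2 only, instead of ranging over all $\gamma$ > 0. The statement above fails without it. *)

theory Defs
  imports "HOL-Probability.Probability"
begin

(* Throughout, N = epsilon^{-1} is a positive natural number, eps = 1 / real N. *)

definition cfg_size :: "nat \<Rightarrow> (nat \<Rightarrow> nat) \<Rightarrow> nat" where
  "cfg_size N xi = (\<Sum>x\<in>{0..N}. xi x)"

definition cfg_right :: "nat \<Rightarrow> (nat \<Rightarrow> nat) \<Rightarrow> nat" where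
  "cfg_right N xi = Max {x \<in> {0..N}. xi x > 0}"

definition avgA :: "nat \<Rightarrow> nat \<Rightarrow> (nat \<Rightarrow> nat) \<Rightarrow> real" where
  "avgA l x xi = (1 / real l) * (\<Sum>y\<in>{x..x+l-1}. real (xi y))"

(* int_r^1 u  (zero if r > 1) *)
definition tail_int :: "real \<Rightarrow> (real \<Rightarrow> real) \<Rightarrow> real" where
  "tail_int r u = (LINT y:{r..1}|lborel. u y)"

definition avgA' :: "nat \<Rightarrow> nat \<Rightarrow> nat \<Rightarrow> (real \<Rightarrow> real) \<Rightarrow> real" where
  "avgA' N l x u = (1 / ((1 / real N) * real l)) *
     (tail_int (real x / real N) u - tail_int (real (x + l) / real N) u)"

definition Redge :: "(real \<Rightarrow> real) \<Rightarrow> real" where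
  "Redge u = Inf {r \<in> {0..1}. tail_int r u = 0}"

(* Sample space Omega_0: strictly increasing positive points (locally finite) and signs +-1.
   Points are indexed from 0: t 0 = t_{1;0}, sigma 0 = sigma_{1;0}. *)
definition Omega0 :: "((nat \<Rightarrow> real) \<times> (nat \<Rightarrow> int)) set" where
  "Omega0 = {(t, s). 0 < t 0 \<and> strict_mono t \<and> filterlim t at_top sequentially \<and>
                     (\<forall>h. s h = 1 \<or> s h = -1)}"

(* n_t after the h-th jump time: nwalk n0 s 0 = n0 (value on [0, t_{1;0})),
   nwalk n0 s (Suc h) = value at time t_{h+1;0} *)
fun nwalk :: "nat \<Rightarrow> (nat \<Rightarrow> int) \<Rightarrow> nat \<Rightarrow> nat" where
  "nwalk n0 s 0 = n0"
| "nwalk n0 s (Suc h) = nat (int (nwalk n0 s h) + s h)"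

definition blockI :: "nat \<Rightarrow> real \<Rightarrow> nat \<Rightarrow> real set" where
  "blockI N delta k = {real k * (real N)^2 * delta .. real (k+1) * (real N)^2 * delta}"

definition Nplus :: "nat \<Rightarrow> real \<Rightarrow> nat \<Rightarrow> ((nat \<Rightarrow> real) \<times> (nat \<Rightarrow> int)) \<Rightarrow> nat \<Rightarrow> nat" where
  "Nplus N delta k w n0 = card {h. fst w h \<in> blockI N delta k \<and>
       nwalk n0 (snd w) (Suc h) = nwalk n0 (snd w) h + 1}"

definition Nminus :: "nat \<Rightarrow> real \<Rightarrow> nat \<Rightarrow> ((nat \<Rightarrow> real) \<times> (nat \<Rightarrow> int)) \<Rightarrow> nat \<Rightarrow> nat" where
  "Nminus N delta k w n0 = card {h. fst w h \<in> blockI N delta k \<and>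
       nwalk n0 (snd w) (Suc h) + 1 = nwalk n0 (snd w) h}"

definition B0 :: "nat \<Rightarrow> real \<Rightarrow> nat \<Rightarrow> ((nat \<Rightarrow> real) \<times> (nat \<Rightarrow> int)) \<Rightarrow> nat" where
  "B0 N delta k w = card {h. snd w h = 1 \<and> fst w h \<in> blockI N delta k}"

definition A0 :: "nat \<Rightarrow> real \<Rightarrow> nat \<Rightarrow> ((nat \<Rightarrow> real) \<times> (nat \<Rightarrow> int)) \<Rightarrow> nat" where
  "A0 N delta k w = card {h. snd w h = -1 \<and> fst w h \<in> blockI N delta k}"

definition goodG :: "real \<Rightarrow> nat \<Rightarrow> real \<Rightarrow> real \<Rightarrow> real \<Rightarrow> ((nat \<Rightarrow> real) \<times> (nat \<Rightarrow> int)) set" where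
  "goodG j N delta gamma T = {w. \<forall>k::nat. real k * delta \<le> T \<longrightarrow>
      \<bar>real (A0 N delta k w) - real N * j * delta\<bar> \<le> (real N) powr (1/2 + gamma) \<and>
      \<bar>real (B0 N delta k w) - real N * j * delta\<bar> \<le> (real N) powr (1/2 + gamma)}"

(* Underlying product space: i.i.d. pairs (exponential(2 j eps) inter-arrival time, uniform sign).
   The Poisson points are the partial sums of the inter-arrival times. *)
definition baseM :: "real \<Rightarrow> nat \<Rightarrow> (nat \<Rightarrow> real \<times> int) measure" where
  "baseM j N = (\<Pi>\<^sub>M h\<in>UNIV. (density lborel (exponential_density (2 * j / real N))
                   \<Otimes>\<^sub>M measure_pmf (pmf_of_set {-1, 1::int})))"

definition to_omega0 :: "(nat \<Rightarrow> real \<times> int) \<Rightarrow> (nat \<Rightarrow> real) \<times> (nat \<Rightarrow> int)" where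
  "to_omega0 v = ((\<lambda>h. \<Sum>i\<le>h. fst (v i)), (\<lambda>h. snd (v h)))"

definition P0 :: "real \<Rightarrow> nat \<Rightarrow> ((nat \<Rightarrow> real) \<times> (nat \<Rightarrow> int)) set \<Rightarrow> real" where
  "P0 j N S = measure (baseM j N) {v \<in> space (baseM j N). to_omega0 v \<in> S}"

end

theory Submission
  imports Defs "HOL-Real_Asymp.Real_Asymp"
begin

(* With N = 1/epsilon, the particle number performs the +-1 walk driven by the signs, reflected
   at 0, so its jumps are the signs as long as it stays positive.  The local averages force
   |xi| >= N * int rho - o(N).  On the good set every block of length delta N^2 carries
   N j delta +- N^(1/2+gamma) signs of each kind, so up to time T N^2 the walk loses at most
   about (T/delta) N^(1/2+gamma) + N j delta, which is less than |xi| once delta < int rho / (4 j)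
   and N is large.
   The good set has probability 1 - O(N^-n): the Poisson points are partial sums of independent
   exponential gaps and the signs are independent fair coins; Hoeffding's inequality for the
   gaps (truncated at N^(1+gamma/4)) locates the index of the first point of every block up to
   N^(1/2+gamma/2), and Hoeffding for the signs then counts the signs in the block. *)

section \<open>The reflected sign walk\<close>

lemma nwalk_step:
  assumes "nwalk n0 s h \<ge> 1" and "s h = 1 \<or> s h = -1"
  shows "int (nwalk n0 s (Suc h)) = int (nwalk n0 s h) + s h"
  using assms by auto

lemma nwalk_ge_partial_sum: "int n0 + (\<Sum>i<h. s i) \<le> int (nwalk n0 s h)"
  by (induction h) auto

lemma sum_signs_eq_card_diff:
  fixes s :: "nat \<Rightarrow> int"
  assumes "\<forall>i. s i = 1 \<or> s i = -1"
  shows "(\<Sum>i<h. s i) = int (card {i. i < h \<and> s i = 1}) - int (card {i. i < h \<and> s i = -1})"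
proof -
  let ?P = "{i. i < h \<and> s i = 1}" and ?M = "{i. i < h \<and> s i = -1}"
  have split: "{..<h} = ?P \<union> ?M" using assms by auto
  have "(\<Sum>i<h. s i) = sum s ?P + sum s ?M"
    unfolding split by (rule sum.union_disjoint) auto
  also have "\<dots> = (\<Sum>i\<in>?P. 1) + (\<Sum>i\<in>?M. -1)"
    by (intro arg_cong2[where f = "(+)"] sum.cong) auto
  finally show ?thesis by simp
qed

lemma nwalk_jumps_eq_signs:
  assumes sgn: "\<forall>h. s h = 1 \<or> s h = -1"
    and pos: "\<And>h. t h \<in> I \<Longrightarrow> nwalk n0 s h \<ge> 1"
  shows "{h. t h \<in> I \<and> nwalk n0 s (Suc h) + 1 = nwalk n0 s h} = {h. s h = -1 \<and> t h \<in> I}"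
    and "{h. t h \<in> I \<and> nwalk n0 s (Suc h) = nwalk n0 s h + 1} = {h. s h = 1 \<and> t h \<in> I}"
proof -
  have step: "int (nwalk n0 s (Suc h)) = int (nwalk n0 s h) + s h" if "t h \<in> I" for h
    using nwalk_step[OF pos[OF that]] sgn by blast
  show "{h. t h \<in> I \<and> nwalk n0 s (Suc h) + 1 = nwalk n0 s h} = {h. s h = -1 \<and> t h \<in> I}"
  proof (intro set_eqI iffI; clarify)
    fix h assume "t h \<in> I" "nwalk n0 s (Suc h) + 1 = nwalk n0 s h"
    then show "s h = -1" using step[of h] by linarith
  next
    fix h assume "t h \<in> I" "s h = -1"
    then show "nwalk n0 s (Suc h) + 1 = nwalk n0 s h" using step[of h] by linarith
  qed
  show "{h. t h \<in> I \<and> nwalk n0 s (Suc h) = nwalk n0 s h + 1} = {h. s h = 1 \<and> t h \<in> I}"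
  proof (intro set_eqI iffI; clarify)
    fix h assume "t h \<in> I" "nwalk n0 s (Suc h) = nwalk n0 s h + 1"
    then show "s h = 1" using step[of h] by linarith
  next
    fix h assume "t h \<in> I" "s h = 1"
    then show "nwalk n0 s (Suc h) = nwalk n0 s h + 1" using step[of h] by linarith
  qed
qed

section \<open>Points of a divergent increasing sequence in consecutive blocks\<close>

lemma finite_indices_bounded:
  fixes t :: "nat \<Rightarrow> real"
  assumes "filterlim t at_top sequentially" and "\<And>i. P i \<Longrightarrow> t i \<le> X"
  shows "finite {i. P i}"
proof -
  obtain n where n: "\<And>i. i \<ge> n \<Longrightarrow> X < t i"
    using assms(1) by (auto simp: filterlim_at_top_dense eventually_sequentially)
  have "{i. P i} \<subseteq> {..<n}"
  proof
    fix i assume "i \<in> {i. P i}"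
    then have "t i \<le> X" using assms(2) by simp
    then show "i \<in> {..<n}" using n[of i] by (cases "n \<le> i") auto
  qed
  then show ?thesis by (rule finite_subset) simp
qed

definition block_count :: "(nat \<Rightarrow> real) \<Rightarrow> (nat \<Rightarrow> int) \<Rightarrow> int \<Rightarrow> real \<Rightarrow> nat \<Rightarrow> nat" where
  "block_count t s \<sigma> c m = card {i. s i = \<sigma> \<and> t i \<in> {real m * c .. real (Suc m) * c}}"

lemma A0_B0_block_count:
  "A0 N delta k (t, s) = block_count t s (-1) ((real N)\<^sup>2 * delta) k"
  "B0 N delta k (t, s) = block_count t s 1 ((real N)\<^sup>2 * delta) k"
  unfolding A0_def B0_def block_count_def blockI_def by (simp_all add: mult.assoc)

lemma card_closed_interval_le:
  fixes t :: "nat \<Rightarrow> real"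
  assumes lim: "filterlim t at_top sequentially" and "strict_mono t"
  shows "card {i. s i = \<sigma> \<and> t i \<in> {a..b}} \<le> card {i. s i = \<sigma> \<and> t i \<in> {a..<b}} + 1"
proof -
  have fin: "finite {i. s i = \<sigma> \<and> t i \<in> {a..<b}}" "finite {i. t i = b}"
    by (rule finite_indices_bounded[OF lim, of _ b], simp)+
  have "card {i. t i = b} \<le> 1"
    using card_le_Suc0_iff_eq[OF fin(2)] strict_mono_imp_inj_on[OF assms(2)] by (auto dest: injD)
  moreover have "{i. s i = \<sigma> \<and> t i \<in> {a..b}} \<subseteq> {i. s i = \<sigma> \<and> t i \<in> {a..<b}} \<union> {i. t i = b}"
    by auto
  ultimately show ?thesis
    using fin by (meson card_Un_le card_mono finite_UnI le_trans add_left_mono)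
qed

lemma card_before_ge_block_sum:
  fixes t :: "nat \<Rightarrow> real"
  assumes lim: "filterlim t at_top sequentially" and sm: "strict_mono t" and c: "c > 0"
  shows "(\<Sum>m<k. int (block_count t s \<sigma> c m)) - int k \<le> int (card {i. s i = \<sigma> \<and> t i < real k * c})"
proof (induction k)
  case (Suc k)
  let ?A = "{i. s i = \<sigma> \<and> t i < real k * c}"
  let ?B = "{i. s i = \<sigma> \<and> t i \<in> {real k * c ..< real (Suc k) * c}}"
  have "{i. s i = \<sigma> \<and> t i < real (Suc k) * c} = ?A \<union> ?B"
    using c by (auto simp: distrib_right)
  moreover have "finite ?A" "finite ?B"
    by (rule finite_indices_bounded[OF lim, of _ "real (Suc k) * c"], use c in \<open>simp add: distrib_right\<close>)+
  then have "card (?A \<union> ?B) = card ?A + card ?B"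
    by (intro card_Un_disjoint) auto
  moreover have "block_count t s \<sigma> c k \<le> card ?B + 1"
    unfolding block_count_def by (rule card_closed_interval_le[OF lim sm])
  ultimately show ?case using Suc by simp
qed simp

lemma card_before_le_block_sum:
  fixes t :: "nat \<Rightarrow> real"
  assumes lim: "filterlim t at_top sequentially" and tpos: "\<And>i. t i \<ge> 0" and c: "c > 0"
  shows "card {i. s i = \<sigma> \<and> t i < real k * c} \<le> (\<Sum>m<k. block_count t s \<sigma> c m)"
proof (induction k)
  case 0
  have "{i. s i = \<sigma> \<and> t i < real 0 * c} = {}" using tpos by (auto simp: not_less)
  then show ?case by (simp only: card.empty)
next
  case (Suc k)
  let ?A = "{i. s i = \<sigma> \<and> t i < real k * c}"
  let ?B = "{i. s i = \<sigma> \<and> t i \<in> {real k * c .. real (Suc k) * c}}"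
  have "{i. s i = \<sigma> \<and> t i < real (Suc k) * c} \<subseteq> ?A \<union> ?B"
    using c by (auto simp: distrib_right)
  moreover have "finite ?A" "finite ?B"
    by (rule finite_indices_bounded[OF lim, of _ "real (Suc k) * c"], use c in \<open>simp add: distrib_right\<close>)+
  ultimately have "card {i. s i = \<sigma> \<and> t i < real (Suc k) * c} \<le> card ?A + card ?B"
    by (meson card_Un_le card_mono finite_UnI le_trans)
  then show ?case using Suc by (simp add: block_count_def)
qed

text \<open>Up to time \<open>t h\<close> the walk has made at least the \<open>+1\<close> steps of the completed blocks
  (each closed block counts a boundary point at most once too often) and at most the \<open>-1\<close> steps
  of the completed blocks and of the current one.\<close>

lemma nwalk_lower_bound_in_block:
  fixes t :: "nat \<Rightarrow> real"
  assumes lim: "filterlim t at_top sequentially" and sm: "strict_mono t" and c: "c > 0"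
    and tpos: "\<And>i. t i \<ge> 0" and sgn: "\<forall>h. s h = 1 \<or> s h = -1"
    and th: "t h \<in> {real k * c .. real (Suc k) * c}"
  shows "int n0 + (\<Sum>m<k. int (block_count t s 1 c m)) - (\<Sum>m<k. int (block_count t s (-1) c m))
           - int k - int (block_count t s (-1) c k) \<le> int (nwalk n0 s h)"
proof -
  have before: "i < h \<longleftrightarrow> t i < t h" for i
    using sm by (simp add: strict_mono_less)
  have ups: "{i. s i = 1 \<and> t i < real k * c} \<subseteq> {i. i < h \<and> s i = 1}"
    using th by (auto simp: before)
  have downs: "{i. i < h \<and> s i = -1} \<subseteq>
      {i. s i = -1 \<and> t i < real k * c} \<union> {i. s i = -1 \<and> t i \<in> {real k * c .. real (Suc k) * c}}"
    using th by (auto simp: before)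
  have "card {i. s i = 1 \<and> t i < real k * c} \<le> card {i. i < h \<and> s i = 1}"
    by (rule card_mono[OF _ ups]) simp
  moreover have "card {i. i < h \<and> s i = -1} \<le>
      card {i. s i = -1 \<and> t i < real k * c} + block_count t s (-1) c k"
  proof -
    have "finite {i. s i = -1 \<and> t i < real k * c}"
      by (rule finite_indices_bounded[OF lim, of _ "real k * c"]) simp
    moreover have "finite {i. s i = -1 \<and> t i \<in> {real k * c .. real (Suc k) * c}}"
      by (rule finite_indices_bounded[OF lim, of _ "real (Suc k) * c"]) simp
    ultimately show ?thesis
      unfolding block_count_def using downs by (meson card_Un_le card_mono finite_UnI le_trans)
  qed
  moreover have "int (card {i. s i = -1 \<and> t i < real k * c}) \<le> (\<Sum>m<k. int (block_count t s (-1) c m))"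
    using card_before_le_block_sum[OF lim tpos c, of s "-1" k] by (simp flip: of_nat_sum)
  ultimately show ?thesis
    using card_before_ge_block_sum[OF lim sm c, of s 1 k] nwalk_ge_partial_sum[of n0 s h]
      sum_signs_eq_card_diff[OF sgn, of h] by linarith
qed

section \<open>Mass of the initial configuration\<close>

lemma tail_int_le:
  assumes C: "AE x in lborel. x \<in> {0..1} \<longrightarrow> rho x \<le> C" and r: "0 \<le> r" and C0: "0 \<le> C"
  shows "tail_int r rho \<le> C * max 0 (1 - r)"
proof (cases "r \<le> 1 \<and> set_integrable lborel {r..1} rho")
  case True
  have "set_integrable lborel {r..1} (\<lambda>_. C)"
    using True by (simp add: set_integrable_def emeasure_lborel_Icc integrable_real_indicator)
  then have "(LINT y:{r..1}|lborel. rho y) \<le> (LINT y:{r..1}|lborel. C)"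
    using True by (intro set_integral_mono_AE) (use C r in \<open>auto elim!: eventually_mono\<close>)
  also have "\<dots> = C * (1 - r)" using True by (subst set_integral_const) auto
  finally show ?thesis unfolding tail_int_def using True by simp
next
  case False
  then have "tail_int r rho = 0"
    unfolding tail_int_def set_lebesgue_integral_def set_integrable_def
    by (auto simp: not_integrable_integral_eq)
  then show ?thesis using C0 by simp
qed

text \<open>Cut \<open>{0..N}\<close> into windows of length \<open>L = \<lfloor>N\<^sup>9\<^sup>/\<^sup>1\<^sup>0\<rfloor>\<close>: on each window the occupation
  is at least \<open>N\<close> times the mass of \<open>rho\<close> over the window, up to an error \<open>L N\<^sup>-\<^sup>1\<^sup>/\<^sup>2\<^sup>0\<close>; the masses
  telescope, and the incomplete last window carries mass at most \<open>C L\<close>.\<close>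

lemma cfg_size_ge_mass:
  fixes rho :: "real \<Rightarrow> real" and X :: "nat \<Rightarrow> nat"
  assumes C: "AE x in lborel. x \<in> {0..1} \<longrightarrow> rho x \<le> C" and C0: "0 \<le> C" and N: "N \<ge> 1"
    and avg: "\<And>x. x \<le> N + 1 - nat \<lfloor>(real N) powr (9/10)\<rfloor> \<Longrightarrow>
          \<bar>avgA (nat \<lfloor>(real N) powr (9/10)\<rfloor>) x X
             - avgA' N (nat \<lfloor>(real N) powr (9/10)\<rfloor>) x rho\<bar> \<le> (1 / real N) powr (1/20)"
  shows "real N * (LINT x:{0..1}|lborel. rho x) - C * real N powr (9/10)
            - real (N+1) * (1 / real N) powr (1/20) \<le> real (cfg_size N X)"
proof -
  define L where "L = nat \<lfloor>(real N) powr (9/10)\<rfloor>"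
  define e where "e = (1 / real N) powr (1/20)"
  define m where "m = (N + 1) div L"
  define tl where "tl = (\<lambda>i. tail_int (real (i * L) / real N) rho)"
  have Npos: "real N > 0" using N by simp
  have p1: "real N powr (9/10) \<ge> 1" using N by (simp add: ge_one_powr_ge_zero)
  then have L1: "L \<ge> 1" and LleR: "real L \<le> real N powr (9/10)" unfolding L_def by linarith+
  have mL: "m * L \<le> N + 1" and mL2: "N < m * L + L"
    unfolding m_def using L1 mod_less_divisor[of L "N + 1"] div_mult_mod_eq[of "N + 1" L] by linarith+
  have window: "real N * (tl i - tl (Suc i)) - real L * e \<le> (\<Sum>y\<in>{i*L..<i*L+L}. real (X y))"
    if i: "i < m" for i
  proof -
    have "(i + 1) * L \<le> m * L" using i by (intro mult_right_mono) auto
    then have "i * L \<le> N + 1 - L" using mL by simp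
    then have "\<bar>avgA L (i*L) X - avgA' N L (i*L) rho\<bar> \<le> e"
      using avg unfolding L_def e_def by blast
    then have "real L * (avgA' N L (i*L) rho - e) \<le> real L * avgA L (i*L) X"
      by (intro mult_left_mono) auto
    moreover have "real L * avgA L (i*L) X = (\<Sum>y\<in>{i*L..<i*L+L}. real (X y))"
      using L1 unfolding avgA_def by (simp add: atLeastLessThanSuc_atLeastAtMost[symmetric])
    moreover have "real L * avgA' N L (i*L) rho = real N * (tl i - tl (Suc i))"
      unfolding avgA'_def tl_def using L1 Npos by (simp add: field_simps)
    ultimately show ?thesis by (simp add: right_diff_distrib)
  qed
  have "real N * (tl 0 - tl m) - real m * real L * e
      = real N * (\<Sum>i<m. tl i - tl (Suc i)) - (\<Sum>i<m. real L * e)"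
    by (simp only: sum_lessThan_telescope') simp
  also have "\<dots> = (\<Sum>i<m. real N * (tl i - tl (Suc i)) - real L * e)"
    by (simp only: sum_distrib_left sum_subtractf right_diff_distrib)
  also have "\<dots> \<le> (\<Sum>i<m. \<Sum>y\<in>{i*L..<i*L+L}. real (X y))"
    by (intro sum_mono window) simp
  also have "\<dots> = (\<Sum>y<m*L. real (X y))"
    by (rule sum.nat_group)
  also have "\<dots> \<le> (\<Sum>y\<in>{0..N}. real (X y))"
    by (rule sum_mono2) (use mL in auto)
  also have "\<dots> = real (cfg_size N X)"
    unfolding cfg_size_def by simp
  finally have size: "real N * (tl 0 - tl m) - real m * real L * e \<le> real (cfg_size N X)" .
  have NmL: "real N < real (m*L) + real L" using mL2 by (metis of_nat_add of_nat_less_iff)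
  have "tl m \<le> C * max 0 (1 - real (m*L) / real N)"
    unfolding tl_def by (rule tail_int_le[OF C _ C0]) simp
  then have "real N * tl m \<le> C * (real N * max 0 (1 - real (m*L) / real N))"
    using Npos by (simp add: mult.left_commute)
  also have "real N * max 0 (1 - real (m*L) / real N) = max 0 (real N - real (m*L))"
    using Npos by (simp add: max_def field_simps)
  also have "\<dots> \<le> real N powr (9/10)"
    using NmL LleR by (simp add: max_def)
  finally have "real N * tl m \<le> C * real N powr (9/10)"
    using C0 by (simp add: mult_left_mono)
  moreover have "real m * real L * e \<le> real (N+1) * e"
    using mL unfolding e_def by (intro mult_right_mono) (simp_all flip: of_nat_mult)
  moreover have "real N * tl 0 = real N * (LINT x:{0..1}|lborel. rho x)"
    unfolding tl_def tail_int_def by simp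
  moreover have "real N * (tl 0 - tl m) = real N * tl 0 - real N * tl m"
    by (rule right_diff_distrib)
  ultimately show ?thesis using size unfolding e_def by linarith
qed

section \<open>The walk started from the initial configuration is not reflected\<close>

text \<open>On the good set each block carries about \<open>N j \<delta>\<close> signs of either kind, so before time
  \<open>T N\<^sup>2\<close> the walk can lose at most about \<open>(T/\<delta>)(2N\<^sup>1\<^sup>/\<^sup>2\<^sup>+\<^sup>\<gamma> + 1) + N j \<delta>\<close> from its initial value.\<close>

lemma nwalk_pos_on_good_block:
  fixes t :: "nat \<Rightarrow> real" and s :: "nat \<Rightarrow> int"
  assumes w: "(t, s) \<in> Omega0" and good: "(t, s) \<in> goodG j N delta gamma T"
    and N: "N \<ge> 1" and d: "delta > 0"
    and n0: "1 + T / delta * (2 * real N powr (1/2 + gamma) + 1) + (real N * j * delta + real N powr (1/2 + gamma))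
               \<le> real n0"
    and k: "real k * delta \<le> T" and th: "t h \<in> blockI N delta k"
  shows "nwalk n0 s h \<ge> 1"
proof -
  define c where "c = (real N)\<^sup>2 * delta"
  define R where "R = real N powr (1/2 + gamma)"
  define mu where "mu = real N * j * delta"
  define A where "A = block_count t s (-1) c"
  define B where "B = block_count t s 1 c"
  have c: "c > 0" unfolding c_def using N d by simp
  have lim: "filterlim t at_top sequentially" and sm: "strict_mono t" and t0: "t 0 > 0"
    and sgn: "\<forall>h. s h = 1 \<or> s h = -1"
    using w unfolding Omega0_def by auto
  have tpos: "t i \<ge> 0" for i
    using t0 strict_mono_less_eq[OF sm, of 0 i] by simp
  have counts: "mu - R \<le> real (B m) \<and> real (A m) \<le> mu + R" if "m \<le> k" for m
  proof -
    have "real m * delta \<le> real k * delta" using that d by (simp add: mult_right_mono)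
    then have "real m * delta \<le> T" using k by linarith
    then show ?thesis
      using good unfolding goodG_def A_def B_def R_def mu_def c_def
      by (auto simp: A0_B0_block_count abs_le_iff)
  qed
  have "int n0 + (\<Sum>m<k. int (B m)) - (\<Sum>m<k. int (A m)) - int k - int (A k) \<le> int (nwalk n0 s h)"
    unfolding A_def B_def
    by (rule nwalk_lower_bound_in_block[OF lim sm c tpos sgn]) (use th in \<open>simp add: blockI_def c_def mult.assoc\<close>)
  then have lower: "real n0 + (\<Sum>m<k. real (B m)) - (\<Sum>m<k. real (A m)) - real k - real (A k)
      \<le> real (nwalk n0 s h)"
    using of_int_le_iff[where 'a=real, THEN iffD2] by fastforce
  have "(\<Sum>m<k. mu - R) \<le> (\<Sum>m<k. real (B m))" "(\<Sum>m<k. real (A m)) \<le> (\<Sum>m<k. mu + R)"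
    using counts by (intro sum_mono, force)+
  moreover have "(\<Sum>m<k. mu - R) = real k * mu - real k * R" "(\<Sum>m<k. mu + R) = real k * mu + real k * R"
    by (simp_all add: algebra_simps)
  moreover have "real k * (2 * R + 1) \<le> T / delta * (2 * R + 1)"
    using k d by (intro mult_right_mono) (simp_all add: field_simps R_def)
  moreover have "real k * (2 * R + 1) = 2 * (real k * R) + real k"
    by (simp add: algebra_simps)
  ultimately have "1 \<le> real (nwalk n0 s h)"
    using lower counts[of k] n0 unfolding R_def[symmetric] mu_def[symmetric] by linarith
  then show ?thesis by simp
qed

lemma jumps_eq_signs_on_good_set:
  fixes j T gamma delta :: real and rho :: "real \<Rightarrow> real" and xi :: "nat \<Rightarrow> nat \<Rightarrow> nat"
  assumes j: "0 < j" and T: "0 < T" and gamma: "0 < gamma" "gamma < 1/2"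
    and rho_Linf: "\<exists>C. AE x in lborel. x \<in> {0..1} \<longrightarrow> 0 \<le> rho x \<and> rho x \<le> C"
    and xi_avg: "\<And>N x. N \<ge> 1 \<Longrightarrow> x \<le> N + 1 - nat \<lfloor>(real N) powr (9/10)\<rfloor> \<Longrightarrow>
          \<bar>avgA (nat \<lfloor>(real N) powr (9/10)\<rfloor>) x (xi N)
             - avgA' N (nat \<lfloor>(real N) powr (9/10)\<rfloor>) x rho\<bar> \<le> (1 / real N) powr (1/20)"
    and delta: "0 < delta" "delta < (LINT x:{0..1}|lborel. rho x) / (4 * j)"
  shows "\<exists>N0. \<forall>N \<ge> N0. \<forall>w \<in> Omega0 \<inter> goodG j N delta gamma T. \<forall>k::nat. real k * delta \<le> T \<longrightarrow>
          Nminus N delta k w (cfg_size N (xi N)) = A0 N delta k w \<and>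
          Nplus N delta k w (cfg_size N (xi N)) = B0 N delta k w"
proof -
  obtain C' where C': "AE x in lborel. x \<in> {0..1} \<longrightarrow> 0 \<le> rho x \<and> rho x \<le> C'"
    using rho_Linf by blast
  define C where "C = max C' 0"
  have C: "AE x in lborel. x \<in> {0..1} \<longrightarrow> rho x \<le> C" and C0: "0 \<le> C"
    using C' unfolding C_def by (auto elim!: eventually_mono)
  define mass where "mass = (LINT x:{0..1}|lborel. rho x)"
  have jd: "j * delta \<le> mass / 4"
    using delta j unfolding mass_def by (simp add: field_simps)
  then have mass: "mass > 0"
    using mult_pos_pos[OF j delta(1)] by linarith
  have "\<forall>\<^sub>F N in sequentially. 1 + T / delta * (2 * real N powr (1/2 + gamma) + 1) + real N powr (1/2 + gamma)
      \<le> real N * mass * (3/4) - C * real N powr (9/10) - real (N+1) * (1 / real N) powr (1/20)"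
    using mass C0 T delta gamma by real_asymp
  then obtain N1 where N1: "\<And>N. N \<ge> N1 \<Longrightarrow> 1 + T / delta * (2 * real N powr (1/2 + gamma) + 1)
      + real N powr (1/2 + gamma)
      \<le> real N * mass * (3/4) - C * real N powr (9/10) - real (N+1) * (1 / real N) powr (1/20)"
    by (auto simp: eventually_sequentially)
  show ?thesis
  proof (intro exI[of _ "max N1 1"] allI impI ballI)
    fix N w k assume N: "max N1 1 \<le> N" and w: "w \<in> Omega0 \<inter> goodG j N delta gamma T"
      and k: "real k * delta \<le> T"
    obtain t s where ts: "w = (t, s)" by fastforce
    have "real N * mass - C * real N powr (9/10) - real (N+1) * (1 / real N) powr (1/20)
        \<le> real (cfg_size N (xi N))"
      unfolding mass_def using N by (intro cfg_size_ge_mass[OF C C0] xi_avg) auto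
    moreover have "real N * j * delta \<le> real N * mass / 4"
      using jd by (simp add: mult.assoc mult_left_mono)
    moreover have "N1 \<le> N" using N by simp
    note N1[OF this]
    ultimately have "1 + T / delta * (2 * real N powr (1/2 + gamma) + 1)
        + (real N * j * delta + real N powr (1/2 + gamma)) \<le> real (cfg_size N (xi N))"
      by linarith
    then have "nwalk (cfg_size N (xi N)) s h \<ge> 1" if "t h \<in> blockI N delta k" for h
      using w N delta(1) k that unfolding ts by (intro nwalk_pos_on_good_block[where k = k]) auto
    moreover have "\<forall>h. s h = 1 \<or> s h = -1" using w unfolding ts Omega0_def by auto
    ultimately show "Nminus N delta k w (cfg_size N (xi N)) = A0 N delta k w \<and>
        Nplus N delta k w (cfg_size N (xi N)) = B0 N delta k w"
      unfolding Nminus_def Nplus_def A0_def B0_def ts fst_conv snd_conv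
      using nwalk_jumps_eq_signs[of s t "blockI N delta k"] by simp
  qed
qed

lemma exp_div_mono:
  fixes a x y :: real
  assumes "a \<le> 0" "0 < x" "x \<le> y"
  shows "exp (a / x) \<le> exp (a / y)"
  using divide_left_mono_neg[of x y a] assms by simp

lemma card_signs_between:
  fixes s :: "nat \<Rightarrow> int"
  assumes "lo \<le> hi"
  shows "card {h. s h = c \<and> lo \<le> h \<and> h < hi} = card {h. h < hi \<and> s h = c} - card {h. h < lo \<and> s h = c}"
    and "card {h. h < lo \<and> s h = c} \<le> card {h. h < hi \<and> s h = c}"
proof -
  have e: "{h. h < hi \<and> s h = c} = {h. h < lo \<and> s h = c} \<union> {h. s h = c \<and> lo \<le> h \<and> h < hi}"
    using assms by auto
  have d: "{h. h < lo \<and> s h = c} \<inter> {h. s h = c \<and> lo \<le> h \<and> h < hi} = {}" by auto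
  have "card {h. h < hi \<and> s h = c} = card {h. h < lo \<and> s h = c} + card {h. s h = c \<and> lo \<le> h \<and> h < hi}"
    unfolding e by (rule card_Un_disjoint) auto
  then show "card {h. s h = c \<and> lo \<le> h \<and> h < hi} = card {h. h < hi \<and> s h = c} - card {h. h < lo \<and> s h = c}"
    and "card {h. h < lo \<and> s h = c} \<le> card {h. h < hi \<and> s h = c}" by simp_all
qed

lemma card_signs_in_window:
  fixes S :: "nat \<Rightarrow> real" and s :: "nat \<Rightarrow> int" and c :: int
  defines "D \<equiv> \<lambda>m. real (card {h. h < m \<and> s h = c})"
  assumes ha1: "\<And>h. h < La \<Longrightarrow> S h < a" and ha2: "\<And>h. h \<ge> Ua \<Longrightarrow> S h > a"
    and hb1: "\<And>h. h < Lb \<Longrightarrow> S h < b" and hb2: "\<And>h. h \<ge> Ub \<Longrightarrow> S h > b"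
    and LU: "La \<le> Ub"
  shows "real (card {h. s h = c \<and> S h \<in> {a..b}}) \<le> D Ub - D La"
    and "real (card {h. s h = c \<and> S h \<in> {a..b}}) \<ge> D Lb - D Ua"
proof -
  have sub1: "{h. s h = c \<and> S h \<in> {a..b}} \<subseteq> {h. s h = c \<and> La \<le> h \<and> h < Ub}"
  proof
    fix h assume h: "h \<in> {h. s h = c \<and> S h \<in> {a..b}}"
    have "La \<le> h" using ha1[of h] h by force
    moreover have "h < Ub" using hb2[of h] h by force
    ultimately show "h \<in> {h. s h = c \<and> La \<le> h \<and> h < Ub}" using h by auto
  qed
  have "card {h. s h = c \<and> S h \<in> {a..b}} \<le> card {h. s h = c \<and> La \<le> h \<and> h < Ub}"
    by (rule card_mono[OF _ sub1]) auto
  also have "\<dots> = card {h. h < Ub \<and> s h = c} - card {h. h < La \<and> s h = c}"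
    by (rule card_signs_between(1)[OF LU])
  finally show "real (card {h. s h = c \<and> S h \<in> {a..b}}) \<le> D Ub - D La"
    unfolding D_def using card_signs_between(2)[OF LU, of s c] by linarith
  show "real (card {h. s h = c \<and> S h \<in> {a..b}}) \<ge> D Lb - D Ua"
  proof (cases "Ua \<le> Lb")
    case True
    have sub2: "{h. s h = c \<and> Ua \<le> h \<and> h < Lb} \<subseteq> {h. s h = c \<and> S h \<in> {a..b}}"
      using ha2 hb1 by (auto simp: less_imp_le)
    have fin: "finite {h. s h = c \<and> S h \<in> {a..b}}"
      by (rule finite_subset[OF sub1]) auto
    have "card {h. h < Lb \<and> s h = c} - card {h. h < Ua \<and> s h = c} = card {h. s h = c \<and> Ua \<le> h \<and> h < Lb}"
      by (rule card_signs_between(1)[OF True, symmetric])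
    also have "\<dots> \<le> card {h. s h = c \<and> S h \<in> {a..b}}" by (rule card_mono[OF fin sub2])
    finally show ?thesis unfolding D_def using card_signs_between(2)[OF True, of s c] by linarith
  next
    case False
    then have "D Lb \<le> D Ua" unfolding D_def using card_signs_between(2)[of Lb Ua s c] by simp
    then show ?thesis by simp
  qed
qed

text \<open>The second disjunct accounts for \<open>card\<close> of an infinite set being \<open>0\<close>.\<close>

lemma card_Collect_nat_eq_iff:
  fixes P :: "nat \<Rightarrow> bool"
  shows "card {h. P h} = n \<longleftrightarrow>
    (\<exists>m. (\<forall>h\<ge>m. \<not> P h) \<and> card {h. h < m \<and> P h} = n) \<or> ((\<forall>m. \<exists>h\<ge>m. P h) \<and> n = 0)"
proof (cases "\<exists>m. \<forall>h\<ge>m. \<not> P h")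
  case True
  then obtain m where m: "\<forall>h\<ge>m. \<not> P h" by blast
  have e: "{h. P h} = {h. h < m \<and> P h}" using m by (auto simp: not_le[symmetric])
  have e2: "card {h. h < m' \<and> P h} = card {h. h < m \<and> P h}" if "\<forall>h\<ge>m'. \<not> P h" for m'
  proof -
    have "{h. h < m' \<and> P h} = {h. P h}" using that by (auto simp: not_le[symmetric])
    then show ?thesis using e by simp
  qed
  show ?thesis using True e e2 by auto
next
  case False
  then have "infinite {h. P h}"
    by (metis (mono_tags, lifting) finite_nat_set_iff_bounded_le mem_Collect_eq not_less_eq_eq)
  then show ?thesis using False by auto
qed

lemma measurable_card_Collect:
  assumes [measurable]: "\<And>h. Measurable.pred M (P h)"
  shows "(\<lambda>v. card {h::nat. P h v}) \<in> measurable M (count_space UNIV)"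
proof (subst measurable_count_space_eq2_countable, intro conjI ballI)
  show "(\<lambda>v. card {h. P h v}) \<in> space M \<rightarrow> UNIV" by simp
  fix n :: nat
  have fm: "(\<lambda>v. (\<Sum>h<m. if P h v then 1 else 0 :: real)) \<in> borel_measurable M" for m by measurable
  have cs: "real (card {h. h < m \<and> P h v}) = (\<Sum>h<m. if P h v then 1 else 0 :: real)" for m v
  proof -
    have "(\<Sum>h<m. if P h v then 1 else 0 :: real) = (\<Sum>h\<in>{..<m} \<inter> {h. P h v}. 1) + (\<Sum>h\<in>{..<m} \<inter> - {h. P h v}. 0)"
      by (rule sum.If_cases) simp
    also have "{..<m} \<inter> {h. P h v} = {h. h < m \<and> P h v}" by auto
    finally show ?thesis by simp
  qed
  have "(\<lambda>v. card {h. P h v}) -` {n} \<inter> space M = {v \<in> space M.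
      (\<exists>m. (\<forall>h\<ge>m. \<not> P h v) \<and> (\<Sum>h<m. if P h v then 1 else 0 :: real) = real n) \<or> ((\<forall>m. \<exists>h\<ge>m. P h v) \<and> n = 0)}"
    unfolding cs[symmetric] of_nat_eq_iff using card_Collect_nat_eq_iff[of "\<lambda>h. P h _" n] by auto
  also have "\<dots> \<in> sets M" by measurable
  finally show "(\<lambda>v. card {h. P h v}) -` {n} \<inter> space M \<in> sets M" .
qed

lemma poly_lower_bound_of_eventually:
  fixes f :: "nat \<Rightarrow> real"
  assumes ev: "\<forall>\<^sub>F N in sequentially. 1 - (1 / real N) ^ n \<le> f N" and nonneg: "\<And>N. 0 \<le> f N"
  shows "\<exists>c. \<forall>N \<ge> 1. 1 - c * (1 / real N) ^ n \<le> f N"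
proof -
  obtain N2 where N2: "\<And>N. N \<ge> N2 \<Longrightarrow> 1 - (1 / real N) ^ n \<le> f N"
    using ev by (auto simp: eventually_sequentially)
  have "1 - max 1 (real N2 ^ n) * (1 / real N) ^ n \<le> f N" if N: "N \<ge> 1" for N
  proof (cases "N \<ge> N2")
    case True
    have "(1 / real N) ^ n \<le> max 1 (real N2 ^ n) * (1 / real N) ^ n"
      using mult_right_mono[of 1 "max 1 (real N2 ^ n)" "(1 / real N) ^ n"] by simp
    then show ?thesis using N2[OF True] by linarith
  next
    case False
    have "1 \<le> (real N2 / real N) ^ n" using False N by (intro one_le_power) simp
    also have "\<dots> = real N2 ^ n * (1 / real N) ^ n" by (simp add: power_divide field_simps)
    also have "\<dots> \<le> max 1 (real N2 ^ n) * (1 / real N) ^ n" by (intro mult_right_mono) auto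
    finally show ?thesis using nonneg[of N] by linarith
  qed
  then show ?thesis by blast
qed

section \<open>The Poisson points and their signs\<close>

definition step_measure :: "real \<Rightarrow> nat \<Rightarrow> (real \<times> int) measure" where
  "step_measure j N = density lborel (exponential_density (2 * j / real N)) \<Otimes>\<^sub>M measure_pmf (pmf_of_set {-1, 1::int})"

lemma baseM_eq_PiM: "baseM j N = PiM UNIV (\<lambda>_. step_measure j N)"
  unfolding baseM_def step_measure_def by simp

lemma prob_space_step_measure: "0 < j \<Longrightarrow> N \<ge> 1 \<Longrightarrow> prob_space (step_measure j N)"
  unfolding step_measure_def
  by (intro prob_space_pair prob_space_exponential_density prob_space_measure_pmf) auto

lemma product_prob_space_step_measure: "0 < j \<Longrightarrow> N \<ge> 1 \<Longrightarrow> product_prob_space (\<lambda>_. step_measure j N)"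
  by (simp add: product_prob_space_def product_prob_space_axioms_def product_sigma_finite_def
      prob_space_step_measure prob_space_imp_sigma_finite)

lemma prob_space_baseM: "0 < j \<Longrightarrow> N \<ge> 1 \<Longrightarrow> prob_space (baseM j N)"
proof -
  assume a: "0 < j" "N \<ge> 1"
  interpret P: product_prob_space "\<lambda>_. step_measure j N" UNIV by (rule product_prob_space_step_measure[OF a])
  show ?thesis unfolding baseM_eq_PiM by (rule P.P.prob_space_axioms)
qed

lemma indep_vars_coordinates:
  assumes "0 < j" "N \<ge> 1"
  shows "prob_space.indep_vars (baseM j N) (\<lambda>_. step_measure j N) (\<lambda>i v. v i) UNIV"
proof -
  interpret P: product_prob_space "\<lambda>_::nat. step_measure j N" UNIV by (rule product_prob_space_step_measure[OF assms])
  have "distr (PiM UNIV (\<lambda>_::nat. step_measure j N)) (PiM UNIV (\<lambda>_. step_measure j N)) (\<lambda>x. \<lambda>i\<in>UNIV. x i) = PiM UNIV (\<lambda>_. step_measure j N)"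
  proof -
    have "distr (PiM UNIV (\<lambda>_. step_measure j N)) (PiM UNIV (\<lambda>_. step_measure j N)) (\<lambda>x. \<lambda>i\<in>UNIV. x i) =
      distr (PiM UNIV (\<lambda>_. step_measure j N)) (PiM UNIV (\<lambda>_. step_measure j N)) (\<lambda>x. x)"
      by (rule distr_cong) (auto simp: space_PiM)
    then show ?thesis using distr_id by metis
  qed
  moreover have "PiM UNIV (\<lambda>i::nat. distr (PiM UNIV (\<lambda>_. step_measure j N)) (step_measure j N) (\<lambda>v. v i)) = PiM UNIV (\<lambda>_. step_measure j N)"
  proof -
    have "(\<lambda>i::nat. distr (PiM UNIV (\<lambda>_::nat. step_measure j N)) (step_measure j N) (\<lambda>v. v i)) = (\<lambda>_. step_measure j N)"
      using P.PiM_component by (intro ext) simp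
    then show ?thesis by (rule arg_cong)
  qed
  ultimately show ?thesis unfolding baseM_eq_PiM
    by (subst P.P.indep_vars_iff_distr_eq_PiM) auto
qed

abbreviation "rate j N \<equiv> 2 * j / real N"

lemma distributed_interarrival:
  assumes j: "0 < j" and N: "N \<ge> 1"
  shows "distributed (baseM j N) lborel (\<lambda>v. fst (v i)) (exponential_density (rate j N))"
proof -
  interpret P: product_prob_space "\<lambda>_::nat. step_measure j N" UNIV by (rule product_prob_space_step_measure[OF j N])
  define D where "D = density lborel (exponential_density (rate j N))"
  have lp: "rate j N > 0" using j N by simp
  have m1: "(\<lambda>v. v i) \<in> measurable (PiM UNIV (\<lambda>_::nat. step_measure j N)) (step_measure j N)"
    by (rule measurable_component_singleton) simp
  have m2: "fst \<in> measurable (step_measure j N) lborel"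
    unfolding step_measure_def by (simp add: measurable_fst'')
  have "distr (PiM UNIV (\<lambda>_::nat. step_measure j N)) lborel (\<lambda>v. fst (v i)) =
      distr (distr (PiM UNIV (\<lambda>_::nat. step_measure j N)) (step_measure j N) (\<lambda>v. v i)) lborel fst"
    using distr_distr[OF m2 m1] by (simp add: comp_def)
  also have "\<dots> = distr (step_measure j N) lborel fst" using P.PiM_component by simp
  also have "\<dots> = distr (step_measure j N) D fst" by (rule distr_cong) (auto simp: D_def)
  also have "\<dots> = D" unfolding step_measure_def D_def by (rule prob_space.distr_pair_fst[OF prob_space_measure_pmf])
  finally have "distr (baseM j N) lborel (\<lambda>v. fst (v i)) = D" unfolding baseM_eq_PiM .
  moreover have "(\<lambda>v. fst (v i)) \<in> measurable (baseM j N) lborel"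
    unfolding baseM_eq_PiM using m1 m2 by (rule measurable_compose)
  ultimately show ?thesis unfolding distributed_def D_def by auto
qed

lemma prob_sign:
  assumes j: "0 < j" and N: "N \<ge> 1" and s: "s \<in> {-1, 1::int}"
  shows "measure (baseM j N) {v \<in> space (baseM j N). snd (v i) = s} = 1/2"
proof -
  interpret P: product_prob_space "\<lambda>_::nat. step_measure j N" UNIV by (rule product_prob_space_step_measure[OF j N])
  define D where "D = density lborel (exponential_density (rate j N))"
  interpret D: prob_space D unfolding D_def by (rule prob_space_exponential_density) (use j N in simp)
  have eq: "{v \<in> space (PiM UNIV (\<lambda>_::nat. step_measure j N)). snd (v i) = s} = {v \<in> space (PiM UNIV (\<lambda>_::nat. step_measure j N)). v i \<in> UNIV \<times> {s}}"
    by (auto simp: mem_Times_iff)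
  have sets: "UNIV \<times> {s} \<in> sets (step_measure j N)"
    unfolding step_measure_def by (intro pair_measureI) (auto simp: D_def)
  have "emeasure (baseM j N) {v \<in> space (baseM j N). snd (v i) = s} = emeasure (step_measure j N) (UNIV \<times> {s})"
    unfolding baseM_eq_PiM eq by (rule P.emeasure_PiM_Collect_single[OF _ sets]) simp
  also have "\<dots> = emeasure D UNIV * emeasure (measure_pmf (pmf_of_set {-1, 1::int})) {s}"
    unfolding step_measure_def D_def[symmetric]
    by (rule measure_pmf.emeasure_pair_measure_Times) (auto simp: D_def)
  also have "\<dots> = ennreal (1/2)"
  proof -
    have "emeasure D UNIV = 1" using D.emeasure_space_1 by (simp add: D_def)
    moreover have "emeasure (measure_pmf (pmf_of_set {-1, 1::int})) {s} = ennreal (1/2)"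
      using s by (auto simp: emeasure_pmf_single)
    ultimately show ?thesis by simp
  qed
  finally show ?thesis unfolding measure_def by (simp del: ennreal_half add: enn2real_ennreal)
qed

locale sign_process =
  fixes j :: real and N :: nat
  assumes j: "0 < j" and N: "N \<ge> 1"
begin

sublocale prob_space "baseM j N" by (rule prob_space_baseM[OF j N])

abbreviation "M \<equiv> baseM j N"
abbreviation "lam \<equiv> rate j N"

lemma lam_pos: "lam > 0" using j N by simp

lemma lam_nonzero: "lam \<noteq> 0" using lam_pos by linarith

definition X :: "nat \<Rightarrow> (nat \<Rightarrow> real \<times> int) \<Rightarrow> real" where "X i v = fst (v i)"
text \<open>Hoeffding's inequality needs bounded summands, hence the truncated gaps \<open>Z K i\<close>.\<close>

definition Z :: "real \<Rightarrow> nat \<Rightarrow> (nat \<Rightarrow> real \<times> int) \<Rightarrow> real" where "Z K i v = max 0 (min (fst (v i)) K)"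
definition Y :: "int \<Rightarrow> nat \<Rightarrow> (nat \<Rightarrow> real \<times> int) \<Rightarrow> real" where "Y s i v = (if snd (v i) = s then 1 else 0)"

lemma X_distr: "distributed M lborel (X i) (exponential_density lam)"
  unfolding X_def[abs_def] by (rule distributed_interarrival[OF j N])

lemma X_meas[measurable]: "X i \<in> borel_measurable M"
  using distributed_measurable[OF X_distr] by simp

lemma coord_meas: "(\<lambda>v. v i) \<in> measurable M (step_measure j N)"
  unfolding baseM_eq_PiM by (rule measurable_component_singleton) simp

lemma fst_meas: "(\<lambda>x. f (fst x)) \<in> borel_measurable (step_measure j N)" if "f \<in> borel_measurable borel" for f :: "real \<Rightarrow> real"
proof -
  have "fst \<in> measurable (step_measure j N) borel" unfolding step_measure_def
    by (rule measurable_fst''[OF measurable_ident_sets]) simp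
  then show ?thesis using that by (rule measurable_compose)
qed

lemma snd_meas: "(\<lambda>x. f (snd x)) \<in> borel_measurable (step_measure j N)" for f :: "int \<Rightarrow> real"
proof -
  have "snd \<in> measurable (step_measure j N) (count_space UNIV)" unfolding step_measure_def
    by (rule measurable_snd''[OF measurable_ident_sets]) simp
  then show ?thesis by (rule measurable_compose) simp
qed

lemma snd_coord_meas: "(\<lambda>v. snd (v i)) \<in> measurable M (count_space UNIV)"
proof -
  have "snd \<in> measurable (step_measure j N) (count_space UNIV)" unfolding step_measure_def
    by (rule measurable_snd''[OF measurable_ident_sets]) simp
  then show ?thesis using coord_meas by (rule measurable_compose[rotated])
qed

lemma fst_coord_meas: "(\<lambda>v. fst (v i)) \<in> borel_measurable M"
  using X_meas unfolding X_def .

lemma X_nonneg: "AE v in M. 0 \<le> X i v"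
  by (subst distributed_AE2[OF X_distr]) (auto simp: erlang_density_def)

lemma X_moment: "expectation (\<lambda>v. X i v ^ p) = fact p / lam ^ p"
  using erlang_ith_moment[OF lam_pos X_distr[of i]] by simp

lemma X_moment_int: "integrable M (\<lambda>v. X i v ^ p)"
  using erlang_ith_moment_integrable[OF lam_pos X_distr[of i]] by simp

lemma X_mean: "expectation (X i) = 1 / lam"
  using X_moment[of i 1] by simp

lemma X_int: "integrable M (X i)"
  using X_moment_int[of i 1] by simp

lemma X_tail_prob: "K \<ge> 0 \<Longrightarrow> prob {v \<in> space M. K < X i v} = exp (- K * lam)"
  using exponential_distributedD_gt[OF X_distr _ lam_pos] by simp

lemma Z_meas[measurable]: "Z K i \<in> borel_measurable M"
  unfolding Z_def by (rule measurable_compose[OF coord_meas fst_meas]) simp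

lemma Z_int: "K \<ge> 0 \<Longrightarrow> integrable M (Z K i)"
  by (rule integrable_const_bound[where B=K]) (auto simp: Z_def)

lemma Z_le_mean: "K \<ge> 0 \<Longrightarrow> expectation (Z K i) \<le> 1 / lam"
proof -
  assume K: "K \<ge> 0"
  have "expectation (Z K i) \<le> expectation (X i)"
    by (rule integral_mono_AE[OF Z_int[OF K] X_int]) (use X_nonneg[of i] in \<open>auto simp: Z_def X_def elim!: eventually_mono\<close>)
  then show ?thesis using X_mean by simp
qed

text \<open>Truncation at \<open>K\<close> costs at most \<open>E X\<^sup>p / K\<^sup>p\<^sup>-\<^sup>1\<close>, since \<open>X \<le> X\<^sup>p / K\<^sup>p\<^sup>-\<^sup>1\<close> where \<open>X > K\<close>.\<close>

lemma Z_ge_mean: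
  assumes K: "K > 0" and p: "p \<ge> 1"
  shows "expectation (Z K i) \<ge> 1 / lam - fact p / (lam ^ p * K ^ (p - 1))"
proof -
  have pt: "X i v - X i v ^ p / K ^ (p - 1) \<le> Z K i v" if x0: "0 \<le> X i v" for v
  proof (cases "X i v \<le> K")
    case True
    then have "Z K i v = X i v" using x0 by (simp add: Z_def X_def)
    moreover have "X i v ^ p / K ^ (p - 1) \<ge> 0" using x0 K by simp
    ultimately show ?thesis by simp
  next
    case False
    then have Zk: "Z K i v = K" using K by (simp add: Z_def X_def)
    have "1 \<le> (X i v / K) ^ (p - 1)" using False K by (intro one_le_power) simp
    then have "X i v \<le> X i v * (X i v / K) ^ (p - 1)" using x0 by (simp add: mult_le_cancel_left1)
    also have "X i v * (X i v / K) ^ (p - 1) = X i v ^ p / K ^ (p - 1)"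
      using p by (simp add: power_divide power_Suc[symmetric] del: power_Suc)
    finally show ?thesis using Zk K by simp
  qed
  have int2: "integrable M (\<lambda>v. X i v - X i v ^ p / K ^ (p - 1))"
    by (intro Bochner_Integration.integrable_diff X_int integrable_divide X_moment_int)
  have "expectation (\<lambda>v. X i v - X i v ^ p / K ^ (p - 1)) \<le> expectation (Z K i)"
    by (rule integral_mono_AE[OF int2 Z_int]) (use K X_nonneg[of i] pt in \<open>auto elim!: eventually_mono\<close>)
  moreover have "expectation (\<lambda>v. X i v - X i v ^ p / K ^ (p - 1)) = 1 / lam - fact p / (lam ^ p * K ^ (p - 1))"
    using X_int X_moment_int X_mean X_moment by (simp add: Bochner_Integration.integral_diff)
  ultimately show ?thesis by simp
qed

lemma Y_meas[measurable]: "Y s i \<in> borel_measurable M"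
  unfolding Y_def by (rule measurable_compose[OF coord_meas, of "\<lambda>x. if snd x = s then 1 else 0"]) (rule snd_meas)

lemma Y_mean: "s \<in> {-1, 1} \<Longrightarrow> expectation (Y s i) = 1/2"
proof -
  assume s: "s \<in> {-1, 1}"
  have "Y s i = indicator {v \<in> space M. snd (v i) = s}"
    by (auto simp: Y_def indicator_def fun_eq_iff space_PiM baseM_eq_PiM step_measure_def space_pair_measure)
  moreover have "{v \<in> space M. snd (v i) = s} \<in> sets M"
  proof -
    have "{v \<in> space M. snd (v i) = s} = (\<lambda>v. snd (v i)) -` {s} \<inter> space M" by auto
    then show ?thesis using measurable_sets[OF snd_coord_meas, of "{s}" i] by simp
  qed
  ultimately show ?thesis using prob_sign[OF j N s] by simp
qed

lemma indep_Z: "indep_vars (\<lambda>_. borel) (\<lambda>i. Z K i) UNIV"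
proof -
  have "indep_vars (\<lambda>_. borel) (\<lambda>i v. (\<lambda>x. max 0 (min (fst x) K)) (v i)) UNIV"
    by (rule indep_vars_compose2[OF indep_vars_coordinates[OF j N]]) (rule fst_meas, simp)
  then show ?thesis unfolding Z_def[abs_def] by simp
qed

lemma indep_Y: "indep_vars (\<lambda>_. borel) (\<lambda>i. Y s i) UNIV"
proof -
  have "indep_vars (\<lambda>_. borel) (\<lambda>i v. (\<lambda>x. if snd x = s then 1 else 0 :: real) (v i)) UNIV"
    by (rule indep_vars_compose2[OF indep_vars_coordinates[OF j N]]) (rule snd_meas)
  then show ?thesis unfolding Y_def[abs_def] by simp
qed

lemma hoeffding_Z:
  assumes I: "finite I" "I \<noteq> {}" and K: "K > 0" and e: "\<epsilon> \<ge> 0"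
  shows "prob {v\<in>space M. (\<Sum>i\<in>I. Z K i v) \<ge> (\<Sum>i\<in>I. expectation (Z K i)) + \<epsilon>} \<le> exp (-2 * \<epsilon>\<^sup>2 / (real (card I) * K\<^sup>2))"
    and "prob {v\<in>space M. (\<Sum>i\<in>I. Z K i v) \<le> (\<Sum>i\<in>I. expectation (Z K i)) - \<epsilon>} \<le> exp (-2 * \<epsilon>\<^sup>2 / (real (card I) * K\<^sup>2))"
proof -
  interpret H: Hoeffding_ineq M I "Z K" "\<lambda>_. 0" "\<lambda>_. K" "\<Sum>i\<in>I. expectation (Z K i)"
  proof unfold_locales
    show "finite I" by fact
    show "indep_vars (\<lambda>_. borel) (Z K) I" using indep_Z by (rule indep_vars_subset) simp
    show "AE x in M. Z K i x \<in> {0..K}" if "i \<in> I" for i using K by (auto simp: Z_def)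
  qed
  have s: "(\<Sum>i\<in>I. (K - 0)\<^sup>2) = real (card I) * K\<^sup>2" by simp
  have pos: "(\<Sum>i\<in>I. (K - 0)\<^sup>2) > 0" using I K by (simp add: card_gt_0_iff)
  show "prob {v\<in>space M. (\<Sum>i\<in>I. Z K i v) \<ge> (\<Sum>i\<in>I. expectation (Z K i)) + \<epsilon>} \<le> exp (-2 * \<epsilon>\<^sup>2 / (real (card I) * K\<^sup>2))"
    using H.Hoeffding_ineq_ge[OF e pos] unfolding s .
  show "prob {v\<in>space M. (\<Sum>i\<in>I. Z K i v) \<le> (\<Sum>i\<in>I. expectation (Z K i)) - \<epsilon>} \<le> exp (-2 * \<epsilon>\<^sup>2 / (real (card I) * K\<^sup>2))"
    using H.Hoeffding_ineq_le[OF e pos] unfolding s .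
qed

lemma hoeffding_Y:
  assumes I: "finite I" "I \<noteq> {}" and e: "\<epsilon> \<ge> 0"
  shows "prob {v\<in>space M. \<bar>(\<Sum>i\<in>I. Y s i v) - (\<Sum>i\<in>I. expectation (Y s i))\<bar> \<ge> \<epsilon>} \<le> 2 * exp (-2 * \<epsilon>\<^sup>2 / real (card I))"
proof -
  interpret H: Hoeffding_ineq M I "Y s" "\<lambda>_. 0" "\<lambda>_. 1" "\<Sum>i\<in>I. expectation (Y s i)"
  proof unfold_locales
    show "finite I" by fact
    show "indep_vars (\<lambda>_. borel) (Y s) I" using indep_Y by (rule indep_vars_subset) simp
    show "AE x in M. Y s i x \<in> {0..1}" if "i \<in> I" for i by (auto simp: Y_def)
  qed
  have s: "(\<Sum>i\<in>I. (1 - 0::real)\<^sup>2) = real (card I)" by simp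
  have pos: "(\<Sum>i\<in>I. (1 - 0::real)\<^sup>2) > 0" using I by (simp add: card_gt_0_iff)
  show ?thesis using H.Hoeffding_ineq_abs_ge[OF e pos] unfolding s .
qed

end

section \<open>Bad events\<close>

text \<open>The union bound \<open>prob_Bad_le\<close> below, with \<open>idx_max\<close> replaced by its explicit upper
  bound \<open>idx_max_le\<close>, as a function of \<open>N\<close> alone.\<close>

definition bad_bound :: "real \<Rightarrow> real \<Rightarrow> real \<Rightarrow> real \<Rightarrow> real \<Rightarrow> real" where
  "bad_bound j g d km N = (let dev = N powr (1/2+g/2); K = N powr (1+g/4); lam = 2*j/N; Mb = 2*j*(km+1)*d*N + dev + 1 in
     (Mb + 1) * exp (- K * lam)
     + (km + 2) * (exp (- 2 * (dev / lam)\<^sup>2 / ((Mb + 1) * K\<^sup>2)) + exp (- 2 * (dev / (2 * lam))\<^sup>2 / ((Mb + 1) * K\<^sup>2)))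
     + 4 * Mb * exp (- 2 * dev\<^sup>2 / Mb))"

locale good_set_bounds = sign_process +
  fixes delta T gamma :: real
  assumes d: "0 < delta" and T: "0 < T" and g: "0 < gamma"
begin

definition "dev = real N powr (1/2 + gamma/2)"
definition "trunc_level = real N powr (1 + gamma/4)"
definition "kmax = nat \<lfloor>T / delta\<rfloor>"
definition "block_start k = real k * ((real N)^2 * delta)"
definition "idx_lo x = nat \<lfloor>lam * x - dev\<rfloor>"
definition "idx_hi x = nat \<lceil>lam * x + dev\<rceil>"
definition "idx_max = idx_hi (block_start (Suc kmax))"
definition "arrival v h = (\<Sum>i\<le>h. X i v)"

text \<open>The \<open>m\<close>-th point of the Poisson process lies at \<open>arrival v m\<close>, about \<open>m / lam\<close>.
  Off \<open>Bad\<close> the gaps are nonnegative and agree with their truncations up to index \<open>idx_max\<close>,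
  point \<open>idx_lo x\<close> arrives before time \<open>x\<close> and point \<open>idx_hi x\<close> after it (for every block
  boundary \<open>x\<close>), and among the first \<open>m\<close> points each sign occurs \<open>m/2 \<plusminus> dev\<close> times.\<close>

definition "Bneg = {v \<in> space M. \<exists>h. X h v < 0}"
definition "Bbig = {v \<in> space M. \<exists>i\<le>idx_max. trunc_level < X i v}"
definition "Blo k = {v \<in> space M. 1 \<le> idx_lo (block_start k) \<and> (\<Sum>i<idx_lo (block_start k). Z trunc_level i v) \<ge> block_start k}"
definition "Bhi k = {v \<in> space M. (\<Sum>i\<le>idx_hi (block_start k). Z trunc_level i v) \<le> block_start k}"
definition "BY s m = {v \<in> space M. \<bar>(\<Sum>i<m. Y s i v) - real m / 2\<bar> \<ge> dev}"
definition "Bad = Bneg \<union> Bbig \<union> (\<Union>k\<le>Suc kmax. Blo k \<union> Bhi k) \<union> (\<Union>s\<in>{1,-1}. \<Union>m\<in>{1..idx_max}. BY s m)"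

lemma dev_pos: "dev > 0" unfolding dev_def using N by simp
lemma trunc_level_pos: "trunc_level > 0" unfolding trunc_level_def using N by simp

lemma block_start_mono: "k \<le> k' \<Longrightarrow> block_start k \<le> block_start k'"
  unfolding block_start_def using d by (intro mult_right_mono) auto

lemma idx_lo_ge: "real (idx_lo x) \<ge> lam * x - dev - 1" unfolding idx_lo_def by linarith
lemma idx_hi_le: "x \<ge> 0 \<Longrightarrow> real (idx_hi x) \<le> lam * x + dev + 1"
proof -
  assume x: "x \<ge> 0"
  have "0 \<le> lam * x" using x lam_pos by (intro mult_nonneg_nonneg) auto
  then have "lam * x + dev \<ge> 0" using dev_pos by linarith
  then show ?thesis unfolding idx_hi_def by linarith
qed
lemma idx_hi_ge: "real (idx_hi x) \<ge> lam * x + dev" unfolding idx_hi_def by linarith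
lemma idx_lo_le: "real (idx_lo x) \<le> max 0 (lam * x - dev)" unfolding idx_lo_def by linarith
lemma idx_lo_le_idx_hi: "x \<le> y \<Longrightarrow> idx_lo x \<le> idx_hi y"
proof -
  assume "x \<le> y"
  then have "lam * x \<le> lam * y" using lam_pos by (intro mult_left_mono) auto
  then show ?thesis unfolding idx_lo_def idx_hi_def using dev_pos by (simp add: nat_le_eq_zle) linarith
qed
lemma idx_hi_mono: "x \<le> y \<Longrightarrow> idx_hi x \<le> idx_hi y"
proof -
  assume "x \<le> y"
  then have "lam * x \<le> lam * y" using lam_pos by (intro mult_left_mono) auto
  then show ?thesis unfolding idx_hi_def by (intro nat_mono ceiling_mono) simp
qed

lemma le_idx_max: assumes "k \<le> Suc kmax" shows "idx_hi (block_start k) \<le> idx_max" "idx_lo (block_start k) \<le> idx_max"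
proof -
  show "idx_hi (block_start k) \<le> idx_max" unfolding idx_max_def by (rule idx_hi_mono[OF block_start_mono[OF assms]])
  show "idx_lo (block_start k) \<le> idx_max" unfolding idx_max_def by (rule idx_lo_le_idx_hi[OF block_start_mono[OF assms]])
qed

lemma rate_block_length: "lam * block_start (Suc k) - lam * block_start k = 2 * (real N * j * delta)"
  unfolding block_start_def using N by (simp add: field_simps power2_eq_square)

lemma card_signs_eq_sum_Y: "real (card {h. h < m \<and> snd (v h) = s}) = (\<Sum>i<m. Y s i v)"
proof -
  have "(\<Sum>i<m. Y s i v) = (\<Sum>i\<in>{..<m} \<inter> {i. snd (v i) = s}. 1) + (\<Sum>i\<in>{..<m} \<inter> - {i. snd (v i) = s}. 0)"
    unfolding Y_def by (rule sum.If_cases) simp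
  also have "{..<m} \<inter> {i. snd (v i) = s} = {h. h < m \<and> snd (v h) = s}" by auto
  finally show ?thesis by simp
qed

lemma X_bounds_of_not_Bad:
  assumes "v \<in> space M" "v \<notin> Bad"
  shows "0 \<le> X i v" and "i \<le> idx_max \<Longrightarrow> X i v \<le> trunc_level"
  using assms unfolding Bad_def Bneg_def Bbig_def by (auto simp: not_less)

lemma arrival_before_block_start:
  assumes v: "v \<in> space M" "v \<notin> Bad" and k: "k \<le> Suc kmax" and h: "h < idx_lo (block_start k)"
  shows "arrival v h < block_start k"
proof -
  have "v \<notin> Blo k" using v k unfolding Bad_def by blast
  then have lt: "(\<Sum>i<idx_lo (block_start k). Z trunc_level i v) < block_start k"
    using v h unfolding Blo_def by auto
  have "arrival v h \<le> (\<Sum>i<idx_lo (block_start k). X i v)"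
    unfolding arrival_def using h X_bounds_of_not_Bad(1)[OF v] by (intro sum_mono2) auto
  also have "\<dots> = (\<Sum>i<idx_lo (block_start k). Z trunc_level i v)"
  proof (intro sum.cong refl)
    fix i assume "i \<in> {..<idx_lo (block_start k)}"
    then have "i \<le> idx_max" using le_idx_max(2)[OF k] by simp
    then show "X i v = Z trunc_level i v"
      using X_bounds_of_not_Bad[OF v, of i] by (simp add: Z_def X_def)
  qed
  finally show ?thesis using lt by simp
qed

lemma arrival_after_block_start:
  assumes v: "v \<in> space M" "v \<notin> Bad" and k: "k \<le> Suc kmax" and h: "idx_hi (block_start k) \<le> h"
  shows "block_start k < arrival v h"
proof -
  have "v \<notin> Bhi k" using v k unfolding Bad_def by blast
  then have "block_start k < (\<Sum>i\<le>idx_hi (block_start k). Z trunc_level i v)"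
    using v unfolding Bhi_def by auto
  also have "\<dots> \<le> (\<Sum>i\<le>idx_hi (block_start k). X i v)"
    by (intro sum_mono) (use X_bounds_of_not_Bad(1)[OF v] in \<open>auto simp: Z_def X_def\<close>)
  also have "\<dots> \<le> arrival v h"
    unfolding arrival_def using h X_bounds_of_not_Bad(1)[OF v] by (intro sum_mono2) auto
  finally show ?thesis .
qed

lemma sign_count_close_of_not_Bad:
  assumes v: "v \<in> space M" "v \<notin> Bad" and m: "m \<le> idx_max" and s: "s \<in> {1, -1}"
  shows "\<bar>real (card {h. h < m \<and> snd (v h) = s}) - real m / 2\<bar> \<le> dev"
proof (cases "m = 0")
  case True
  then show ?thesis using dev_pos by simp
next
  case False
  then have "v \<notin> BY s m" using v m s unfolding Bad_def by auto
  then show ?thesis using v unfolding BY_def card_signs_eq_sum_Y by auto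
qed

text \<open>The points in block \<open>k\<close> have indices between \<open>idx_lo\<close> of its left end and \<open>idx_hi\<close> of
  its right end, and at least those between \<open>idx_hi\<close> of the left and \<open>idx_lo\<close> of the right end;
  the balance of the signs up to each of these four indices then fixes the count of each sign.\<close>

lemma block_sign_count_close:
  assumes v: "v \<in> space M" "v \<notin> Bad" and k: "k \<le> kmax" and s: "s \<in> {1, -1}"
  shows "\<bar>real (card {h. snd (v h) = s \<and> arrival v h \<in> {block_start k .. block_start (Suc k)}})
           - real N * j * delta\<bar> \<le> 3 * dev + 1"
proof -
  define D where "D m = real (card {h. h < m \<and> snd (v h) = s})" for m
  define C where "C = real (card {h. snd (v h) = s \<and> arrival v h \<in> {block_start k .. block_start (Suc k)}})"
  have k1: "k \<le> Suc kmax" "Suc k \<le> Suc kmax" using k by auto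
  have "block_start k \<ge> 0" "block_start (Suc k) \<ge> 0" unfolding block_start_def using d by simp_all
  note idx_bounds = idx_lo_ge[of "block_start k"] idx_lo_ge[of "block_start (Suc k)"]
    idx_hi_le[OF this(1)] idx_hi_le[OF this(2)]
  have "idx_lo (block_start k) \<le> idx_hi (block_start (Suc k))"
    by (intro idx_lo_le_idx_hi block_start_mono) simp
  note window = card_signs_in_window[of "idx_lo (block_start k)" "arrival v" "block_start k"
      "idx_hi (block_start k)" "idx_lo (block_start (Suc k))" "block_start (Suc k)"
      "idx_hi (block_start (Suc k))" "\<lambda>h. snd (v h)" s, OF _ _ _ _ this, folded D_def C_def]
  have window_bounds: "C \<le> D (idx_hi (block_start (Suc k))) - D (idx_lo (block_start k))"
    "D (idx_lo (block_start (Suc k))) - D (idx_hi (block_start k)) \<le> C"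
    using arrival_before_block_start[OF v] arrival_after_block_start[OF v] k1
    by (intro window; blast)+
  have D_close: "\<bar>D m - real m / 2\<bar> \<le> dev" if "m \<le> idx_max" for m
    using that unfolding D_def by (rule sign_count_close_of_not_Bad[OF v _ s])
  note le = le_idx_max[OF k1(1)] le_idx_max[OF k1(2)]
  have "C \<le> real N * j * delta + (3 * dev + 1)" "real N * j * delta - (3 * dev + 1) \<le> C"
    using window_bounds idx_bounds rate_block_length[of k]
      D_close[OF le(1)] D_close[OF le(2)] D_close[OF le(3)] D_close[OF le(4)]
    unfolding abs_le_iff by linarith+
  then show ?thesis unfolding C_def abs_le_iff by linarith
qed

lemma goodG_of_not_Bad:
  assumes v: "v \<in> space M" "v \<notin> Bad"
    and big: "3 * dev + 1 \<le> real N powr (1/2 + gamma)"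
  shows "to_omega0 v \<in> goodG j N delta gamma T"
  unfolding goodG_def
proof (intro CollectI allI impI conjI)
  fix k :: nat assume "real k * delta \<le> T"
  then have "real k \<le> T / delta" using d by (simp add: field_simps)
  then have k: "k \<le> kmax" unfolding kmax_def by linarith
  have block: "blockI N delta k = {block_start k .. block_start (Suc k)}"
    unfolding blockI_def block_start_def by (simp add: mult.assoc)
  have "A0 N delta k (to_omega0 v) = card {h. snd (v h) = -1 \<and> arrival v h \<in> blockI N delta k}"
    "B0 N delta k (to_omega0 v) = card {h. snd (v h) = 1 \<and> arrival v h \<in> blockI N delta k}"
    unfolding A0_def B0_def to_omega0_def arrival_def X_def by simp_all
  then show "\<bar>real (A0 N delta k (to_omega0 v)) - real N * j * delta\<bar> \<le> real N powr (1 / 2 + gamma)"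
    and "\<bar>real (B0 N delta k (to_omega0 v)) - real N * j * delta\<bar> \<le> real N powr (1 / 2 + gamma)"
    using block_sign_count_close[OF v k, of "-1"] block_sign_count_close[OF v k, of 1] big
    unfolding block by simp_all
qed

lemma Bneg_sets: "Bneg \<in> sets M"
  unfolding Bneg_def by measurable

lemma prob_Bneg: "prob Bneg = 0"
proof -
  have "AE v in M. \<forall>h. 0 \<le> X h v" using X_nonneg by (simp add: AE_all_countable)
  then have "AE v in M. \<not> (\<exists>h. X h v < 0)" by (auto elim!: eventually_mono simp: not_less)
  then show ?thesis unfolding Bneg_def by (rule prob_eq_0_AE)
qed

lemma Bbig_sets: "Bbig \<in> sets M"
  unfolding Bbig_def by measurable

lemma prob_Bbig: "prob Bbig \<le> (real idx_max + 1) * exp (- trunc_level * lam)"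
proof -
  have "Bbig = (\<Union>i\<in>{..idx_max}. {v \<in> space M. trunc_level < X i v})" unfolding Bbig_def by auto
  then have "prob Bbig \<le> (\<Sum>i\<in>{..idx_max}. prob {v \<in> space M. trunc_level < X i v})"
    by (simp only:) (rule measure_UNION_le, auto)
  also have "\<dots> = (\<Sum>i\<in>{..idx_max}. exp (- trunc_level * lam))"
    using X_tail_prob trunc_level_pos by (intro sum.cong) auto
  also have "\<dots> = (real idx_max + 1) * exp (- trunc_level * lam)" by simp
  finally show ?thesis .
qed

lemma Blo_sets: "Blo k \<in> sets M" unfolding Blo_def by measurable
lemma Bhi_sets: "Bhi k \<in> sets M" unfolding Bhi_def by measurable
lemma BY_sets: "BY s m \<in> sets M" unfolding BY_def by measurable

lemma prob_Blo:
  assumes k: "k \<le> Suc kmax"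
  shows "prob (Blo k) \<le> exp (- 2 * (dev / lam)\<^sup>2 / ((real idx_max + 1) * trunc_level\<^sup>2))"
proof (cases "idx_lo (block_start k) = 0")
  case True
  then have "Blo k = {}" unfolding Blo_def by auto
  then show ?thesis by simp
next
  case False
  define L where "L = idx_lo (block_start k)"
  have L1: "L \<ge> 1" using False unfolding L_def by simp
  have "real L \<le> max 0 (lam * block_start k - dev)" unfolding L_def by (rule idx_lo_le)
  then have Lle: "real L \<le> lam * block_start k - dev" using L1 by linarith
  have E: "(\<Sum>i<L. expectation (Z trunc_level i)) \<le> real L / lam"
  proof -
    have "(\<Sum>i<L. expectation (Z trunc_level i)) \<le> (\<Sum>i<L. 1 / lam)"
      using Z_le_mean trunc_level_pos by (intro sum_mono) auto
    then show ?thesis by simp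
  qed
  have "real L / lam \<le> (lam * block_start k - dev) / lam" using Lle lam_pos by (intro divide_right_mono) auto
  also have "\<dots> = block_start k - dev / lam"
    by (simp only: diff_divide_distrib nonzero_mult_div_cancel_left[OF lam_nonzero])
  finally have E2: "(\<Sum>i<L. expectation (Z trunc_level i)) + dev / lam \<le> block_start k" using E by linarith
  have sub: "Blo k \<subseteq> {v\<in>space M. (\<Sum>i<L. Z trunc_level i v) \<ge> (\<Sum>i<L. expectation (Z trunc_level i)) + dev / lam}"
    unfolding Blo_def L_def[symmetric] using E2 by auto
  have "prob (Blo k) \<le> prob {v\<in>space M. (\<Sum>i<L. Z trunc_level i v) \<ge> (\<Sum>i<L. expectation (Z trunc_level i)) + dev / lam}"
    by (rule finite_measure_mono[OF sub]) measurable
  also have "\<dots> \<le> exp (- 2 * (dev / lam)\<^sup>2 / (real (card {..<L}) * trunc_level\<^sup>2))"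
    using hoeffding_Z(1)[of "{..<L}" trunc_level "dev / lam"] L1 trunc_level_pos dev_pos lam_pos j N by (auto simp: lessThan_empty_iff)
  also have "\<dots> \<le> exp (- 2 * (dev / lam)\<^sup>2 / ((real idx_max + 1) * trunc_level\<^sup>2))"
  proof -
    have "L \<le> idx_max" unfolding L_def by (rule le_idx_max(2)[OF k])
    then have "real (card {..<L}) * trunc_level\<^sup>2 \<le> (real idx_max + 1) * trunc_level\<^sup>2" by (intro mult_right_mono) auto
    moreover have "0 < real (card {..<L}) * trunc_level\<^sup>2" using L1 trunc_level_pos by simp
    ultimately show ?thesis by (intro exp_div_mono) auto
  qed
  finally show ?thesis .
qed

lemma prob_Bhi:
  assumes k: "k \<le> Suc kmax" and p: "p \<ge> 1"
    and cond: "(real idx_max + 1) * (fact p / (lam ^ p * trunc_level ^ (p - 1))) \<le> dev / (2 * lam)"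
  shows "prob (Bhi k) \<le> exp (- 2 * (dev / (2 * lam))\<^sup>2 / ((real idx_max + 1) * trunc_level\<^sup>2))"
proof -
  define U where "U = idx_hi (block_start k)"
  define eK where "eK = fact p / (lam ^ p * trunc_level ^ (p - 1))"
  have eK0: "eK \<ge> 0" unfolding eK_def using lam_pos trunc_level_pos by simp
  have UM: "U \<le> idx_max" unfolding U_def by (rule le_idx_max(1)[OF k])
  have Uge: "real U \<ge> lam * block_start k + dev" unfolding U_def by (rule idx_hi_ge)
  have E: "(\<Sum>i\<le>U. expectation (Z trunc_level i)) \<ge> (real U + 1) * (1 / lam - eK)"
  proof -
    have a: "(\<Sum>i\<le>U. expectation (Z trunc_level i)) \<ge> (\<Sum>i\<le>U. 1 / lam - eK)"
      using Z_ge_mean[OF trunc_level_pos p] unfolding eK_def by (intro sum_mono) auto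
    have b: "(\<Sum>i\<le>U. 1 / lam - eK) = (real U + 1) * (1 / lam - eK)" by simp
    show ?thesis using a unfolding b .
  qed
  have "(real U + 1) * eK \<le> (real idx_max + 1) * eK" using UM eK0 by (intro mult_right_mono) auto
  then have Ue: "(real U + 1) * eK \<le> dev / (2 * lam)" using cond unfolding eK_def by linarith
  have "(real U + 1) / lam \<ge> (lam * block_start k + dev) / lam" using Uge lam_pos by (intro divide_right_mono) auto
  moreover have "(lam * block_start k + dev) / lam = block_start k + dev / lam"
    by (simp only: add_divide_distrib nonzero_mult_div_cancel_left[OF lam_nonzero])
  moreover have "dev / lam = dev / (2 * lam) + dev / (2 * lam)" by (simp add: field_simps)
  moreover have "(real U + 1) * (1 / lam - eK) = (real U + 1) / lam - (real U + 1) * eK"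
    by (simp add: algebra_simps)
  ultimately have E2: "(\<Sum>i\<le>U. expectation (Z trunc_level i)) - dev / (2 * lam) \<ge> block_start k"
    \<comment> \<open>not \<open>linarith\<close>: it would unfold \<open>lam = 2 j / N\<close> and normalise the quotients apart\<close>
    using E Ue by (simp only:)
  have sub: "Bhi k \<subseteq> {v\<in>space M. (\<Sum>i\<le>U. Z trunc_level i v) \<le> (\<Sum>i\<le>U. expectation (Z trunc_level i)) - dev / (2 * lam)}"
    unfolding Bhi_def U_def[symmetric] using E2 by auto
  have "prob (Bhi k) \<le> prob {v\<in>space M. (\<Sum>i\<le>U. Z trunc_level i v) \<le> (\<Sum>i\<le>U. expectation (Z trunc_level i)) - dev / (2 * lam)}"
    by (rule finite_measure_mono[OF sub]) measurable
  also have "\<dots> \<le> exp (- 2 * (dev / (2 * lam))\<^sup>2 / (real (card {..U}) * trunc_level\<^sup>2))"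
    using hoeffding_Z(2)[of "{..U}" trunc_level "dev / (2 * lam)"] trunc_level_pos dev_pos lam_pos j N by auto
  also have "\<dots> \<le> exp (- 2 * (dev / (2 * lam))\<^sup>2 / ((real idx_max + 1) * trunc_level\<^sup>2))"
  proof -
    have "real (card {..U}) * trunc_level\<^sup>2 \<le> (real idx_max + 1) * trunc_level\<^sup>2" using UM by (intro mult_right_mono) auto
    moreover have "0 < real (card {..U}) * trunc_level\<^sup>2" using trunc_level_pos by simp
    ultimately show ?thesis by (intro exp_div_mono) auto
  qed
  finally show ?thesis .
qed

lemma prob_BY:
  assumes m: "1 \<le> m" "m \<le> idx_max" and s: "s \<in> {1, -1}"
  shows "prob (BY s m) \<le> 2 * exp (- 2 * dev\<^sup>2 / real idx_max)"
proof -
  have "(\<Sum>i<m. expectation (Y s i)) = (\<Sum>i<m. 1 / 2)" using Y_mean s by (intro sum.cong) auto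
  then have E: "(\<Sum>i<m. expectation (Y s i)) = real m / 2" by simp
  have "prob (BY s m) \<le> 2 * exp (- 2 * dev\<^sup>2 / real (card {..<m}))"
    unfolding BY_def using hoeffding_Y[of "{..<m}" dev s] m dev_pos unfolding E by (auto simp: lessThan_empty_iff)
  also have "\<dots> \<le> 2 * exp (- 2 * dev\<^sup>2 / real idx_max)"
    using exp_div_mono[of "- 2 * dev\<^sup>2" "real m" "real idx_max"] m by simp
  finally show ?thesis .
qed

lemma goodG_sets: "{v \<in> space M. to_omega0 v \<in> goodG j N delta gamma T} \<in> sets M"
proof -
  have m1[measurable]: "(\<lambda>v. card {h. snd (v h) = c \<and> (\<Sum>i\<le>h. fst (v i)) \<in> blockI N delta k}) \<in> measurable M (count_space UNIV)" for c k
  proof (rule measurable_card_Collect)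
    fix h
    have [measurable]: "(\<lambda>v. snd (v i)) \<in> measurable M (count_space UNIV)" for i by (rule snd_coord_meas)
    have [measurable]: "(\<lambda>v. fst (v i)) \<in> borel_measurable M" for i by (rule fst_coord_meas)
    show "Measurable.pred M (\<lambda>v. snd (v h) = c \<and> (\<Sum>i\<le>h. fst (v i)) \<in> blockI N delta k)"
      unfolding blockI_def by measurable
  qed
  have "{v \<in> space M. to_omega0 v \<in> goodG j N delta gamma T} = {v \<in> space M. \<forall>k::nat. real k * delta \<le> T \<longrightarrow>
      \<bar>real (card {h. snd (v h) = -1 \<and> (\<Sum>i\<le>h. fst (v i)) \<in> blockI N delta k}) - real N * j * delta\<bar> \<le> (real N) powr (1/2 + gamma) \<and>
      \<bar>real (card {h. snd (v h) = 1 \<and> (\<Sum>i\<le>h. fst (v i)) \<in> blockI N delta k}) - real N * j * delta\<bar> \<le> (real N) powr (1/2 + gamma)}"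
    unfolding goodG_def A0_def B0_def to_omega0_def by simp
  also have "\<dots> \<in> sets M" by measurable
  finally show ?thesis .
qed

lemma prob_Bad_le:
  assumes p: "p \<ge> 1"
    and cond: "(real idx_max + 1) * (fact p / (lam ^ p * trunc_level ^ (p - 1))) \<le> dev / (2 * lam)"
  shows "prob Bad \<le> (real idx_max + 1) * exp (- trunc_level * lam)
     + (real kmax + 2) * (exp (- 2 * (dev / lam)\<^sup>2 / ((real idx_max + 1) * trunc_level\<^sup>2)) + exp (- 2 * (dev / (2 * lam))\<^sup>2 / ((real idx_max + 1) * trunc_level\<^sup>2)))
     + 4 * real idx_max * exp (- 2 * dev\<^sup>2 / real idx_max)"
proof -
  define E1 where "E1 = exp (- 2 * (dev / lam)\<^sup>2 / ((real idx_max + 1) * trunc_level\<^sup>2))"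
  define E2 where "E2 = exp (- 2 * (dev / (2 * lam))\<^sup>2 / ((real idx_max + 1) * trunc_level\<^sup>2))"
  define E3 where "E3 = exp (- 2 * dev\<^sup>2 / real idx_max)"
  define U1 where "U1 = (\<Union>k\<le>Suc kmax. Blo k \<union> Bhi k)"
  define U2 where "U2 = (\<Union>s\<in>{1,-1::int}. \<Union>m\<in>{1..idx_max}. BY s m)"
  have U1s: "U1 \<in> sets M" unfolding U1_def using Blo_sets Bhi_sets by (intro sets.finite_UN) auto
  have U2s: "U2 \<in> sets M" unfolding U2_def using BY_sets by (intro sets.finite_UN) auto
  have pU1: "prob U1 \<le> (real kmax + 2) * (E1 + E2)"
  proof -
    have "prob U1 \<le> (\<Sum>k\<le>Suc kmax. prob (Blo k \<union> Bhi k))"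
      unfolding U1_def using Blo_sets Bhi_sets by (intro measure_UNION_le) auto
    also have "\<dots> \<le> (\<Sum>k\<le>Suc kmax. E1 + E2)"
    proof (intro sum_mono)
      fix k assume k: "k \<in> {..Suc kmax}"
      have "prob (Blo k \<union> Bhi k) \<le> prob (Blo k) + prob (Bhi k)"
        using Blo_sets Bhi_sets by (intro measure_Un_le) auto
      also have "\<dots> \<le> E1 + E2" unfolding E1_def E2_def
        using prob_Blo[of k] prob_Bhi[of k p, OF _ p cond] k by (intro add_mono) auto
      finally show "prob (Blo k \<union> Bhi k) \<le> E1 + E2" .
    qed
    also have "\<dots> = (real kmax + 2) * (E1 + E2)" by simp
    finally show ?thesis .
  qed
  have pU2: "prob U2 \<le> 4 * real idx_max * E3"
  proof -
    have "prob U2 \<le> (\<Sum>s\<in>{1,-1::int}. prob (\<Union>m\<in>{1..idx_max}. BY s m))"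
      unfolding U2_def using BY_sets by (intro measure_UNION_le sets.finite_UN) auto
    also have "\<dots> \<le> (\<Sum>s\<in>{1,-1::int}. real idx_max * (2 * E3))"
    proof (intro sum_mono)
      fix s :: int assume s: "s \<in> {1, -1}"
      have "prob (\<Union>m\<in>{1..idx_max}. BY s m) \<le> (\<Sum>m\<in>{1..idx_max}. prob (BY s m))"
        using BY_sets by (intro measure_UNION_le) auto
      also have "\<dots> \<le> (\<Sum>m\<in>{1..idx_max}. 2 * E3)" unfolding E3_def
        using prob_BY s by (intro sum_mono) auto
      also have "\<dots> = real idx_max * (2 * E3)" by simp
      finally show "prob (\<Union>m\<in>{1..idx_max}. BY s m) \<le> real idx_max * (2 * E3)" .
    qed
    also have "\<dots> = 4 * real idx_max * E3" by simp
    finally show ?thesis .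
  qed
  have "Bad = Bneg \<union> Bbig \<union> U1 \<union> U2" unfolding Bad_def U1_def U2_def by simp
  then have "prob Bad \<le> prob (Bneg \<union> Bbig \<union> U1) + prob U2"
    using Bneg_sets Bbig_sets U1s U2s by (simp add: measure_Un_le)
  also have "prob (Bneg \<union> Bbig \<union> U1) \<le> prob (Bneg \<union> Bbig) + prob U1"
    using Bneg_sets Bbig_sets U1s by (simp add: measure_Un_le)
  also have "prob (Bneg \<union> Bbig) \<le> prob Bneg + prob Bbig"
    using Bneg_sets Bbig_sets by (simp add: measure_Un_le)
  finally show ?thesis using prob_Bneg prob_Bbig pU1 pU2 unfolding E1_def E2_def E3_def by linarith
qed

lemma idx_max_ge_dev: "real idx_max \<ge> dev"
  unfolding idx_max_def using idx_hi_ge[of "block_start (Suc kmax)"] lam_pos d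
  by (smt (verit) block_start_def mult_nonneg_nonneg of_nat_0_le_iff zero_le_power2)

lemma idx_max_le: "real idx_max \<le> 2*j*(real kmax+1)*delta*real N + dev + 1"
proof -
  have "real idx_max \<le> lam * block_start (Suc kmax) + dev + 1" unfolding idx_max_def
    by (rule idx_hi_le) (simp add: block_start_def d less_imp_le)
  also have "lam * block_start (Suc kmax) = 2*j*(real kmax+1)*delta*real N"
    unfolding block_start_def using N by (simp add: power2_eq_square field_simps)
  finally show ?thesis .
qed

lemma prob_Bad_le_bad_bound:
  assumes p: "p \<ge> 1"
    and cond: "(real idx_max + 1) * (fact p / (lam ^ p * trunc_level ^ (p - 1))) \<le> dev / (2 * lam)"
  shows "prob Bad \<le> bad_bound j gamma delta (real kmax) (real N)"
proof -
  define Mb where "Mb = 2*j*(real kmax+1)*delta*real N + dev + 1"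
  have M0: "real idx_max > 0" using idx_max_ge_dev dev_pos by linarith
  have MM: "real idx_max \<le> Mb" unfolding Mb_def by (rule idx_max_le)
  have t1: "(real idx_max + 1) * exp (- trunc_level * lam) \<le> (Mb + 1) * exp (- trunc_level * lam)"
    using MM by (intro mult_right_mono) auto
  have t2: "exp (- 2 * (dev / lam)\<^sup>2 / ((real idx_max + 1) * trunc_level\<^sup>2))
      \<le> exp (- 2 * (dev / lam)\<^sup>2 / ((Mb + 1) * trunc_level\<^sup>2))"
    using exp_div_mono[of "- 2 * (dev / lam)\<^sup>2" "(real idx_max + 1) * trunc_level\<^sup>2" "(Mb + 1) * trunc_level\<^sup>2"]
      MM trunc_level_pos by (simp add: mult_right_mono)
  have t3: "exp (- 2 * (dev / (2 * lam))\<^sup>2 / ((real idx_max + 1) * trunc_level\<^sup>2))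
      \<le> exp (- 2 * (dev / (2 * lam))\<^sup>2 / ((Mb + 1) * trunc_level\<^sup>2))"
    using exp_div_mono[of "- 2 * (dev / (2 * lam))\<^sup>2" "(real idx_max + 1) * trunc_level\<^sup>2" "(Mb + 1) * trunc_level\<^sup>2"]
      MM trunc_level_pos by (simp add: mult_right_mono)
  have "exp (- 2 * dev\<^sup>2 / real idx_max) \<le> exp (- 2 * dev\<^sup>2 / Mb)"
    using exp_div_mono[of "- 2 * dev\<^sup>2" "real idx_max" Mb] MM M0 by simp
  then have t4: "4 * real idx_max * exp (- 2 * dev\<^sup>2 / real idx_max) \<le> 4 * Mb * exp (- 2 * dev\<^sup>2 / Mb)"
    using MM M0 by (intro mult_mono) auto
  have "prob Bad \<le> (real idx_max + 1) * exp (- trunc_level * lam)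
     + (real kmax + 2) * (exp (- 2 * (dev / lam)\<^sup>2 / ((real idx_max + 1) * trunc_level\<^sup>2))
                         + exp (- 2 * (dev / (2 * lam))\<^sup>2 / ((real idx_max + 1) * trunc_level\<^sup>2)))
     + 4 * real idx_max * exp (- 2 * dev\<^sup>2 / real idx_max)"
    by (rule prob_Bad_le[OF p cond])
  also have "\<dots> \<le> (Mb + 1) * exp (- trunc_level * lam)
     + (real kmax + 2) * (exp (- 2 * (dev / lam)\<^sup>2 / ((Mb + 1) * trunc_level\<^sup>2))
                         + exp (- 2 * (dev / (2 * lam))\<^sup>2 / ((Mb + 1) * trunc_level\<^sup>2)))
     + 4 * Mb * exp (- 2 * dev\<^sup>2 / Mb)"
    using t1 t2 t3 t4 by (intro add_mono mult_left_mono) auto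
  also have "\<dots> = bad_bound j gamma delta (real kmax) (real N)"
    unfolding bad_bound_def Let_def Mb_def dev_def trunc_level_def by simp
  finally show ?thesis .
qed

lemma P0_goodG_ge:
  assumes p: "p \<ge> 1"
    and cond: "(real idx_max + 1) * (fact p / (lam ^ p * trunc_level ^ (p - 1))) \<le> dev / (2 * lam)"
    and big: "3 * dev + 1 \<le> real N powr (1/2 + gamma)"
  shows "P0 j N (goodG j N delta gamma T) \<ge> 1 - bad_bound j gamma delta (real kmax) (real N)"
proof -
  define G where "G = {v \<in> space M. to_omega0 v \<in> goodG j N delta gamma T}"
  have Bad_sets: "Bad \<in> sets M" unfolding Bad_def
    using Bneg_sets Bbig_sets Blo_sets Bhi_sets BY_sets by (intro sets.Un sets.finite_UN) auto
  have "space M - Bad \<subseteq> G" unfolding G_def using goodG_of_not_Bad[OF _ _ big] by auto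
  then have "prob (space M - Bad) \<le> prob G"
    by (rule finite_measure_mono) (unfold G_def, rule goodG_sets)
  moreover have "prob (space M - Bad) = 1 - prob Bad" using prob_compl[OF Bad_sets] by simp
  moreover have "P0 j N (goodG j N delta gamma T) = prob G" unfolding P0_def G_def ..
  ultimately show ?thesis using prob_Bad_le_bad_bound[OF p cond] by linarith
qed

end

section \<open>Probability of the good set\<close>

lemma bad_bound_decay:
  fixes g j d km n :: real assumes "0<g" "g < 1/2" "j > 0" "d > 0" "km \<ge> 0"
  shows "((\<lambda>N::real. bad_bound j g d km N * N powr n) \<longlongrightarrow> 0) at_top"
proof -
  define Mb where "Mb = (\<lambda>N::real. 2*j*(km+1)*d*N + N powr (1/2+g/2) + 1)"
  have A: "((\<lambda>N::real. (Mb N + 1) * exp (- (N powr (1+g/4)) * (2*j/N)) * N powr n) \<longlongrightarrow> 0) at_top"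
    using assms unfolding Mb_def by real_asymp
  have B: "((\<lambda>N::real. exp (- 2 * (N powr (1/2+g/2) / (2*j/N))\<^sup>2 / ((Mb N + 1) * (N powr (1+g/4))\<^sup>2)) * N powr n) \<longlongrightarrow> 0) at_top"
    using assms unfolding Mb_def by real_asymp
  have B': "((\<lambda>N::real. exp (- 2 * (N powr (1/2+g/2) / (2 * (2*j/N)))\<^sup>2 / ((Mb N + 1) * (N powr (1+g/4))\<^sup>2)) * N powr n) \<longlongrightarrow> 0) at_top"
    using assms unfolding Mb_def by real_asymp
  have C: "((\<lambda>N::real. 4 * Mb N * exp (- 2 * (N powr (1/2+g/2))\<^sup>2 / Mb N) * N powr n) \<longlongrightarrow> 0) at_top"
    using assms unfolding Mb_def by real_asymp
  have BB: "((\<lambda>N::real. (km + 2) * (exp (- 2 * (N powr (1/2+g/2) / (2*j/N))\<^sup>2 / ((Mb N + 1) * (N powr (1+g/4))\<^sup>2)) * N powr n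
      + exp (- 2 * (N powr (1/2+g/2) / (2 * (2*j/N)))\<^sup>2 / ((Mb N + 1) * (N powr (1+g/4))\<^sup>2)) * N powr n)) \<longlongrightarrow> (km + 2) * (0 + 0)) at_top"
    by (intro tendsto_mult tendsto_const tendsto_add B B')
  have all: "((\<lambda>N::real. (Mb N + 1) * exp (- (N powr (1+g/4)) * (2*j/N)) * N powr n
     + (km + 2) * (exp (- 2 * (N powr (1/2+g/2) / (2*j/N))\<^sup>2 / ((Mb N + 1) * (N powr (1+g/4))\<^sup>2)) * N powr n
      + exp (- 2 * (N powr (1/2+g/2) / (2 * (2*j/N)))\<^sup>2 / ((Mb N + 1) * (N powr (1+g/4))\<^sup>2)) * N powr n)
     + 4 * Mb N * exp (- 2 * (N powr (1/2+g/2))\<^sup>2 / Mb N) * N powr n) \<longlongrightarrow> 0 + (km + 2) * (0 + 0) + 0) at_top"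
    by (intro tendsto_add A BB C)
  have eq: "bad_bound j g d km N * N powr n = (Mb N + 1) * exp (- (N powr (1+g/4)) * (2*j/N)) * N powr n
     + (km + 2) * (exp (- 2 * (N powr (1/2+g/2) / (2*j/N))\<^sup>2 / ((Mb N + 1) * (N powr (1+g/4))\<^sup>2)) * N powr n
      + exp (- 2 * (N powr (1/2+g/2) / (2 * (2*j/N)))\<^sup>2 / ((Mb N + 1) * (N powr (1+g/4))\<^sup>2)) * N powr n)
     + 4 * Mb N * exp (- 2 * (N powr (1/2+g/2))\<^sup>2 / Mb N) * N powr n" for N
    unfolding bad_bound_def Let_def Mb_def by (simp only: distrib_right mult.assoc)
  show ?thesis using all unfolding eq[symmetric] by simp
qed

text \<open>For \<open>p \<ge> 4/g + 1\<close> the truncation bias of \<open>Z_ge_mean\<close> at level \<open>N\<^sup>1\<^sup>+\<^sup>g\<^sup>/\<^sup>4\<close> is bounded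
  independently of \<open>N\<close>, whereas the gaps have mean of order \<open>N\<close>.\<close>

lemma fact_over_moment_scale_le:
  fixes j g :: real and N p :: nat
  assumes j: "0 < j" and N: "N \<ge> 1" and g: "0 < g" and p: "p = nat \<lceil>4 / g\<rceil> + 1"
  shows "fact p / ((2 * j / real N) ^ p * (real N powr (1 + g/4)) ^ (p - 1)) \<le> fact p / (2 * j) ^ p"
proof -
  have N0: "real N > 0" using N by simp
  have e1: "(real N powr (1 + g/4)) ^ (p - 1) = real N powr (real (p - 1) * (1 + g/4))"
    using N0 by (simp add: powr_power)
  have "real (p - 1) \<ge> 4 / g" unfolding p by linarith
  then have "real (p - 1) * (g / 4) \<ge> (4 / g) * (g / 4)" using g by (intro mult_right_mono) auto
  moreover have "(4 / g) * (g / 4) = 1" using g by simp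
  ultimately have "real (p - 1) * (g / 4) \<ge> 1" by linarith
  moreover have "real p = real (p - 1) + 1" unfolding p by simp
  moreover have "real (p - 1) * (1 + g/4) = real (p - 1) + real (p - 1) * (g / 4)" by (simp add: algebra_simps)
  ultimately have le: "real p \<le> real (p - 1) * (1 + g/4)" by linarith
  have "real N ^ p = real N powr real p" using N0 by (simp add: powr_realpow)
  also have "\<dots> \<le> real N powr (real (p - 1) * (1 + g/4))" using N by (intro powr_mono le) simp
  finally have K: "real N ^ p \<le> (real N powr (1 + g/4)) ^ (p - 1)" unfolding e1 .
  have "(2 * j) ^ p = (2 * j / real N) ^ p * real N ^ p" using N0 by (simp add: power_divide)
  also have "\<dots> \<le> (2 * j / real N) ^ p * (real N powr (1 + g/4)) ^ (p - 1)"
    using K j N0 by (intro mult_left_mono) auto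
  finally have "(2 * j) ^ p \<le> (2 * j / real N) ^ p * (real N powr (1 + g/4)) ^ (p - 1)" .
  moreover have "(2 * j) ^ p > 0" using j by simp
  ultimately show ?thesis by (intro divide_left_mono) auto
qed

lemma P0_goodG_eventually_ge:
  fixes j T gamma delta :: real
  assumes j: "0 < j" and d: "0 < delta" and T: "0 < T" and g: "0 < gamma" "gamma < 1/2"
  shows "\<forall>\<^sub>F N in sequentially. 1 - (1 / real N) ^ n \<le> P0 j N (goodG j N delta gamma T)"
proof -
  define km where "km = nat \<lfloor>T / delta\<rfloor>"
  define p where "p = nat \<lceil>4 / gamma\<rceil> + 1"
  define cp where "cp = fact p / (2 * j) ^ p"
  have cp: "cp > 0" unfolding cp_def using j by simp
  have "\<forall>\<^sub>F x in at_top. bad_bound j gamma delta (real km) x * x powr real n < 1"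
    using order_tendstoD(2)[OF bad_bound_decay[OF g j d of_nat_0_le_iff[of km], of "real n"]] by simp
  then have "\<forall>\<^sub>F N in sequentially. bad_bound j gamma delta (real km) (real N) * real N powr real n < 1"
    using filterlim_iff[THEN iffD1, OF filterlim_real_sequentially] by blast
  moreover have "\<forall>\<^sub>F N in sequentially. (2*j*(real km+1)*delta*real N + real N powr (1/2+gamma/2) + 1 + 1) * cp
      \<le> real N powr (1/2+gamma/2) / (2 * (2*j/real N))"
    using g j d cp by real_asymp
  moreover have "\<forall>\<^sub>F N in sequentially. 3 * real N powr (1/2+gamma/2) + 1 \<le> real N powr (1/2+gamma)"
    using g by real_asymp
  moreover have "\<forall>\<^sub>F N in sequentially. 1 \<le> N" by (rule eventually_ge_at_top)
  ultimately show ?thesis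
  proof eventually_elim
    case (elim N)
    interpret B: good_set_bounds j N delta T gamma by unfold_locales (use j elim d T g in auto)
    have km: "B.kmax = km" unfolding B.kmax_def km_def ..
    have dev: "B.dev = real N powr (1/2+gamma/2)" unfolding B.dev_def ..
    have N0: "real N > 0" using elim by simp
    have fb: "fact p / (B.lam ^ p * B.trunc_level ^ (p - 1)) \<le> cp"
      unfolding cp_def B.trunc_level_def using elim by (intro fact_over_moment_scale_le[OF j _ g(1) p_def])
    have fb0: "fact p / (B.lam ^ p * B.trunc_level ^ (p - 1)) \<ge> 0" using B.lam_pos B.trunc_level_pos by simp
    have "real B.idx_max + 1 \<le> 2*j*(real km+1)*delta*real N + real N powr (1/2+gamma/2) + 1 + 1"
      using B.idx_max_le unfolding km dev by linarith
    then have "(real B.idx_max + 1) * (fact p / (B.lam ^ p * B.trunc_level ^ (p - 1))) \<le>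
        (2*j*(real km+1)*delta*real N + real N powr (1/2+gamma/2) + 1 + 1) * cp"
      using fb fb0 by (intro mult_mono) auto
    also have "\<dots> \<le> B.dev / (2 * B.lam)" using elim unfolding dev by simp
    finally have cond: "(real B.idx_max + 1) * (fact p / (B.lam ^ p * B.trunc_level ^ (p - 1)))
        \<le> B.dev / (2 * B.lam)" .
    have p1: "p \<ge> 1" unfolding p_def by simp
    have big: "3 * B.dev + 1 \<le> real N powr (1/2 + gamma)" using elim unfolding dev by simp
    have "1 - bad_bound j gamma delta (real km) (real N) \<le> P0 j N (goodG j N delta gamma T)"
      using B.P0_goodG_ge[OF p1 cond big] unfolding km .
    moreover have "bad_bound j gamma delta (real km) (real N) * real N ^ n < 1"
      using elim N0 by (simp add: powr_realpow)
    then have "bad_bound j gamma delta (real km) (real N) \<le> (1 / real N) ^ n"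
      using N0 by (simp add: field_simps power_one_over)
    ultimately show ?case by linarith
  qed
qed

lemma P0_goodG_ge_poly:
  fixes j T gamma delta :: real
  assumes j: "0 < j" and d: "0 < delta" and T: "0 < T" and g: "0 < gamma" "gamma < 1/2"
  shows "\<forall>n::nat. \<exists>c. \<forall>N \<ge> 1. P0 j N (goodG j N delta gamma T) \<ge> 1 - c * (1 / real N) ^ n"
  using poly_lower_bound_of_eventually[OF P0_goodG_eventually_ge[OF assms]] by (simp add: P0_def)

theorem mainTheorem6:
  fixes j T gamma :: real and rho :: "real \<Rightarrow> real" and xi :: "nat \<Rightarrow> nat \<Rightarrow> nat"
  assumes j_pos: "0 < j"
    and rho_meas: "set_borel_measurable lborel {0..1} rho"
    and rho_Linf: "\<exists>C. AE x in lborel. x \<in> {0..1} \<longrightarrow> 0 \<le> rho x \<and> rho x \<le> C"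
    and rho_mass: "(LINT x:{0..1}|lborel. rho x) > 0"
    and xi_supp: "\<And>N x. N \<ge> 1 \<Longrightarrow> x > N \<Longrightarrow> xi N x = 0"
    and xi_avg: "\<And>N x. N \<ge> 1 \<Longrightarrow> x \<le> N + 1 - nat \<lfloor>(real N) powr (9/10)\<rfloor> \<Longrightarrow>
          \<bar>avgA (nat \<lfloor>(real N) powr (9/10)\<rfloor>) x (xi N)
             - avgA' N (nat \<lfloor>(real N) powr (9/10)\<rfloor>) x rho\<bar> \<le> (1 / real N) powr (1/20)"
    and xi_edge: "\<And>N. N \<ge> 1 \<Longrightarrow> Redge rho < 1 \<Longrightarrow>
          \<bar>real (cfg_right N (xi N)) / real N - Redge rho\<bar> \<le> (1 / real N) powr (1/20)"
    and T_pos: "0 < T"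
    and gamma_pos: "0 < gamma" and gamma_small: "gamma < 1/2"
  shows "\<exists>dstar > 0. \<forall>delta. 0 < delta \<and> delta < dstar \<longrightarrow>
     (\<exists>N0. \<forall>N \<ge> N0. \<forall>w \<in> Omega0 \<inter> goodG j N delta gamma T. \<forall>k::nat. real k * delta \<le> T \<longrightarrow>
          Nminus N delta k w (cfg_size N (xi N)) = A0 N delta k w \<and>
          Nplus N delta k w (cfg_size N (xi N)) = B0 N delta k w)
   \<and> (\<forall>n::nat. \<exists>c. \<forall>N \<ge> 1. P0 j N (goodG j N delta gamma T) \<ge> 1 - c * (1 / real N) ^ n)"
proof -
  define dstar where "dstar = (LINT x:{0..1}|lborel. rho x) / (4 * j)"
  have "dstar > 0" using rho_mass j_pos unfolding dstar_def by simp
  moreover have "(\<exists>N0. \<forall>N \<ge> N0. \<forall>w \<in> Omega0 \<inter> goodG j N delta gamma T. \<forall>k::nat. real k * delta \<le> T \<longrightarrow>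
          Nminus N delta k w (cfg_size N (xi N)) = A0 N delta k w \<and>
          Nplus N delta k w (cfg_size N (xi N)) = B0 N delta k w)
      \<and> (\<forall>n::nat. \<exists>c. \<forall>N \<ge> 1. P0 j N (goodG j N delta gamma T) \<ge> 1 - c * (1 / real N) ^ n)"
    if delta: "0 < delta" "delta < dstar" for delta
    using jumps_eq_signs_on_good_set[OF j_pos T_pos gamma_pos gamma_small rho_Linf xi_avg delta[unfolded dstar_def]]
      P0_goodG_ge_poly[OF j_pos delta(1) T_pos gamma_pos gamma_small] by blast
  ultimately show ?thesis by blast
qed

end
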